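(* Let $d\ge2$, $0<s<1$, $\beta(\theta)=\dfrac{|\cos(\theta/2)|}{|\sin(\theta/2)|^{1+2s}}$ for $0<|\theta|\le\pi/4$, and $$l_{1;d}(v,\xi)=\int_{|\theta|\le\pi/4}\beta(\theta)\Bigl[1-\frac{\exp\bigl(-2\tan^2(\frac\theta2)(|\xi|^2+\frac{|v|^2}4)\bigr)}{\cos^{2d}(\frac\theta2)}\Bigr]d\theta .$$ Then $l_{1;d}\in\mathbf S^s(\mathbb R^{2d})$, and there exist real numbers $(c_{k,d})_{k\ge1}$ such that for all $N\ge1$, $$l_{1;d}-\Bigl(c_0\lambda^s-d_0+\sum_{k=1}^Nc_{k,d}\lambda^{s-k}\Bigr)\in\mathbf S^{s-N-1}(\mathbb R^{2d}),\qquad\lambda=1+|\xi|^2+\tfrac{|v|^2}4,$$ where $c_0=\frac{2^{1+s}}{s}\Gamma(1-s)$ and $d_0=\frac{2^{1+s}(2+\sqrt2)^s}{s}$.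
   Context: Symbol classes: $\mathbf S^m(\mathbb R^{2d})$ is the set of smooth $a(v,\xi)$ on $\mathbb R^d\times\mathbb R^d$ with $|\partial_v^\alpha\partial_\xi^\beta a(v,\xi)|\le C_{\alpha\beta}\langle(v,\xi)\rangle^{2m-|\alpha|-|\beta|}$ for all multi-indices, $\langle(v,\xi)\rangle=(1+|v|^2+|\xi|^2)^{1/2}$. *)

theory Defs
  imports "HOL-Analysis.Analysis"
begin

text \<open>Multi-index derivatives \<partial>_v^\<alpha> \<partial>_\<xi>^\<beta> on R^d x R^d are exactly the iterated
  partial derivatives along lists of coordinate (Basis) vectors of the product
  space, with |\<alpha>|+|\<beta>| = length of the list.\<close>

definition dderiv :: "'b::euclidean_space \<Rightarrow> ('b \<Rightarrow> real) \<Rightarrow> 'b \<Rightarrow> real" where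
  "dderiv e f z = deriv (\<lambda>t. f (z + t *\<^sub>R e)) 0"

fun iter_dderiv :: "'b::euclidean_space list \<Rightarrow> ('b \<Rightarrow> real) \<Rightarrow> 'b \<Rightarrow> real" where
  "iter_dderiv [] f = f"
| "iter_dderiv (e # es) f = dderiv e (iter_dderiv es f)"

definition smooth_fun :: "('b::euclidean_space \<Rightarrow> real) \<Rightarrow> bool" where
  "smooth_fun f \<longleftrightarrow>
     (\<forall>es. set es \<subseteq> Basis \<longrightarrow>
        continuous_on UNIV (iter_dderiv es f) \<and>
        (\<forall>e\<in>Basis. \<forall>z. (\<lambda>t. iter_dderiv es f (z + t *\<^sub>R e)) differentiable (at 0)))"

definition symbol_class :: "real \<Rightarrow> ('a::euclidean_space \<times> 'a \<Rightarrow> real) \<Rightarrow> bool" where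
  "symbol_class m a \<longleftrightarrow> smooth_fun a \<and>
     (\<forall>es. set es \<subseteq> Basis \<longrightarrow>
        (\<exists>C. \<forall>z. \<bar>iter_dderiv es a z\<bar> \<le>
              C * (sqrt (1 + (norm z)\<^sup>2)) powr (2 * m - real (length es))))"

definition beta_s :: "real \<Rightarrow> real \<Rightarrow> real" where
  "beta_s s \<theta> = abs (cos (\<theta>/2)) / (abs (sin (\<theta>/2)) powr (1 + 2 * s))"

text \<open>l_{1;d}(v,\<xi>), with d = DIM('a).\<close>
definition l1 :: "real \<Rightarrow> 'a::euclidean_space \<times> 'a \<Rightarrow> real" where
  "l1 s z =
     set_lebesgue_integral lborel {-pi/4..pi/4} (\<lambda>\<theta>.
        beta_s s \<theta> * (1 - exp (- 2 * (tan (\<theta>/2))\<^sup>2 * ((norm (snd z))\<^sup>2 + (norm (fst z))\<^sup>2 / 4))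
                          / (cos (\<theta>/2)) ^ (2 * DIM('a))))"

end

theory Submission
  imports Defs
begin

(* Write lam = 1 + |xi|^2 + |v|^2/4.  Since the integrand of l_{1;d} depends on (v,xi) only
   through lam, l_{1;d} = F(lam) for a function F of one variable, and the whole proof is
   about F.

   (1) Symbol calculus for functions of lam: if F = H 0 where H j is the j-th derivative of
       F on (1/2,oo) and |H j x| <= C x^(m-j) for x >= 1 (an "order family" of order m),
       then F o lam lies in S^m.  Every derivative of F o lam is a sum of H j (lam z) times
       polynomials of degree 2j - (number of derivatives taken).
   (2) Laplace transforms x |-> int K(w) exp(-2xw) dw of kernels with |K w| <= A w^gamma on
       w > 0 (gamma > -1) form order families of order -(gamma+1); explicit Gamma integrals.
   (3) The substitution w = tan^2(theta/2) turns l_{1;d} into 2 int_0^b h(w) dw with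
       b = tan^2(pi/8); a Taylor expansion of (1+w)^(s-1+d) exp(2w) at w = 0 splits h into
       explicitly integrable pieces plus Laplace transforms of dominated kernels.
   (4) Hence F(x) = c0 x^s - d0 + sum_{k=1..N} c_k x^(s-k) + R_N(x) with R_N an order family
       of order s-N-1, and part (1) gives the theorem. *)

definition jbr :: "'b::euclidean_space \<Rightarrow> real" where
  "jbr z = sqrt (1 + (norm z)\<^sup>2)"

definition lam_of :: "'a::euclidean_space \<times> 'a \<Rightarrow> real" where
  "lam_of z = 1 + (norm (snd z))\<^sup>2 + (norm (fst z))\<^sup>2 / 4"

lemma jbr_ge1: "1 \<le> jbr z"
  unfolding jbr_def by simp

lemma jbr_pos: "0 < jbr z"
  using jbr_ge1[of z] by linarith

lemma norm_le_jbr: "norm z \<le> jbr z"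
  unfolding jbr_def by (simp add: real_le_rsqrt)

lemma jbr_sq: "(jbr z)\<^sup>2 = 1 + (norm z)\<^sup>2"
  unfolding jbr_def by simp

lemma lam_of_ge1: "1 \<le> lam_of z"
  unfolding lam_of_def by simp

lemma lam_of_cont: "continuous_on UNIV lam_of"
  unfolding lam_of_def by (intro continuous_intros) auto

text \<open>\<open>\<lambda>\<close> is comparable to \<open>\<langle>z\<rangle>\<^sup>2\<close>, so powers of \<open>\<lambda>\<close> are bounded by powers of \<open>\<langle>z\<rangle>\<close>.\<close>

lemma lam_of_jbr_bounds: "(jbr z)\<^sup>2 / 4 \<le> lam_of z" "lam_of z \<le> (jbr z)\<^sup>2"
  unfolding jbr_sq lam_of_def by (cases z; simp add: norm_Pair)+

lemma lam_of_powr_le: "lam_of z powr p \<le> 4 powr \<bar>p\<bar> * jbr z powr (2 * p)"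
proof -
  have B: "jbr z powr (2 * p) = ((jbr z)\<^sup>2) powr p"
    using jbr_pos[of z] by (simp add: powr_powr[symmetric] powr_realpow)
  have l0: "0 < lam_of z" using lam_of_ge1[of z] by linarith
  show ?thesis
  proof (cases "0 \<le> p")
    case True
    have 1: "lam_of z powr p \<le> ((jbr z)\<^sup>2) powr p"
      by (rule powr_mono2) (use True lam_of_jbr_bounds(2)[of z] l0 in auto)
    have "1 \<le> 4 powr \<bar>p\<bar>" by (rule ge_one_powr_ge_zero) auto
    then have "((jbr z)\<^sup>2) powr p \<le> 4 powr \<bar>p\<bar> * ((jbr z)\<^sup>2) powr p"
      by (metis mult_1 mult_right_mono powr_ge_zero)
    with 1 show ?thesis unfolding B by linarith
  next
    case False
    have 1: "lam_of z powr p \<le> ((jbr z)\<^sup>2 / 4) powr p"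
      by (rule powr_mono2') (use lam_of_jbr_bounds(1)[of z] False jbr_pos[of z] in auto)
    have e1: "((jbr z)\<^sup>2 / 4) powr p = (jbr z)\<^sup>2 powr p / 4 powr p" by (rule powr_divide)
    have e2: "4 powr \<bar>p\<bar> = 1 / 4 powr p" using False powr_minus_divide[of 4 p] by simp
    have "(jbr z)\<^sup>2 powr p / 4 powr p = 4 powr \<bar>p\<bar> * (jbr z)\<^sup>2 powr p" unfolding e2 by simp
    with 1 e1 show ?thesis unfolding B by simp
  qed
qed

definition lam_grad :: "'a::euclidean_space \<times> 'a \<Rightarrow> 'a \<times> 'a" where
  "lam_grad e = ((1/2) *\<^sub>R fst e, 2 *\<^sub>R snd e)"

lemma lam_of_along_line:
  "lam_of (z + t *\<^sub>R e) = lam_of z + t * inner (lam_grad e) z + t^2 * ((norm (snd e))\<^sup>2 + (norm (fst e))\<^sup>2/4)"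
  unfolding lam_of_def lam_grad_def power2_norm_eq_inner
  by (cases z; cases e) (simp add: inner_add_left inner_add_right inner_commute algebra_simps power2_eq_square)

lemma lam_of_deriv:
  "((\<lambda>t. lam_of (z + t *\<^sub>R e)) has_real_derivative inner (lam_grad e) z) (at 0)"
proof -
  have "((\<lambda>t. lam_of z + t * inner (lam_grad e) z + t^2 * ((norm (snd e))\<^sup>2 + (norm (fst e))\<^sup>2/4))
     has_real_derivative inner (lam_grad e) z) (at 0)"
    by (auto intro!: derivative_eq_intros)
  then show ?thesis by (simp add: lam_of_along_line)
qed

inductive poly_ord :: "int \<Rightarrow> ('b::euclidean_space \<Rightarrow> real) \<Rightarrow> bool" where
  poly_zero: "poly_ord k (\<lambda>_. 0)"
| poly_const: "0 \<le> k \<Longrightarrow> poly_ord k (\<lambda>_. c)"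
| poly_lin: "1 \<le> k \<Longrightarrow> poly_ord k (\<lambda>z. inner a z)"
| poly_add: "poly_ord k f \<Longrightarrow> poly_ord k g \<Longrightarrow> poly_ord k (\<lambda>z. f z + g z)"
| poly_mult: "poly_ord k f \<Longrightarrow> poly_ord l g \<Longrightarrow> poly_ord (k + l) (\<lambda>z. f z * g z)"

lemma poly_ord_mono: "poly_ord k f \<Longrightarrow> k \<le> k' \<Longrightarrow> poly_ord k' f"
proof (induction arbitrary: k' rule: poly_ord.induct)
  case (poly_mult k f l g)
  have "poly_ord (k' - l) f" using poly_mult by simp
  from poly_ord.poly_mult[OF this poly_mult.hyps(2)] show ?case by simp
qed (auto intro: poly_ord.intros)

lemma poly_ord_cont: "poly_ord k f \<Longrightarrow> continuous_on UNIV f"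
  by (induction rule: poly_ord.induct) (auto intro!: continuous_intros)
lemma poly_ord_bound: "poly_ord k f \<Longrightarrow> \<exists>C\<ge>0. \<forall>z. \<bar>f z\<bar> \<le> C * jbr z powr (real_of_int k)"
proof (induction rule: poly_ord.induct)
  case (poly_zero k)
  then show ?case by (intro exI[of _ 0]) auto
next
  case (poly_const k c)
  show ?case
  proof (intro exI[of _ "\<bar>c\<bar>"] conjI allI)
    fix z
    have "1 \<le> jbr z powr (real_of_int k)"
      using poly_const jbr_ge1 by (intro ge_one_powr_ge_zero) auto
    then show "\<bar>c\<bar> \<le> \<bar>c\<bar> * jbr z powr (real_of_int k)"
      by (metis abs_ge_zero mult.right_neutral mult_left_mono)
  qed simp
next
  case (poly_lin k a)
  show ?case
  proof (intro exI[of _ "norm a"] conjI allI)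
    fix z
    have "\<bar>inner a z\<bar> \<le> norm a * norm z" by (rule Cauchy_Schwarz_ineq2)
    also have "\<dots> \<le> norm a * jbr z" by (intro mult_left_mono norm_le_jbr) auto
    also have "jbr z = jbr z powr 1" using jbr_pos[of z] by simp
    also have "\<dots> \<le> jbr z powr (real_of_int k)"
      using poly_lin jbr_ge1 by (intro powr_mono) auto
    finally show "\<bar>inner a z\<bar> \<le> norm a * jbr z powr (real_of_int k)"
      by (simp add: mult_left_mono)
  qed simp
next
  case (poly_add k f g)
  then obtain C1 C2 where C: "C1 \<ge> 0" "C2 \<ge> 0" "\<forall>z. \<bar>f z\<bar> \<le> C1 * jbr z powr (real_of_int k)"
     "\<forall>z. \<bar>g z\<bar> \<le> C2 * jbr z powr (real_of_int k)" by blast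
  show ?case
    by (intro exI[of _ "C1 + C2"]) (use C in \<open>auto simp: distrib_right intro: abs_triangle_ineq[THEN order_trans] add_mono\<close>)
next
  case (poly_mult k f l g)
  then obtain C1 C2 where C: "C1 \<ge> 0" "C2 \<ge> 0" "\<forall>z. \<bar>f z\<bar> \<le> C1 * jbr z powr (real_of_int k)"
     "\<forall>z. \<bar>g z\<bar> \<le> C2 * jbr z powr (real_of_int l)" by blast
  show ?case
  proof (intro exI[of _ "C1 * C2"] conjI allI)
    fix z
    have "\<bar>f z * g z\<bar> = \<bar>f z\<bar> * \<bar>g z\<bar>" by (simp add: abs_mult)
    also have "\<dots> \<le> (C1 * jbr z powr (real_of_int k)) * (C2 * jbr z powr (real_of_int l))"
      using C by (intro mult_mono) auto
    also have "\<dots> = C1 * C2 * jbr z powr (real_of_int (k + l))"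
      by (simp add: powr_add)
    finally show "\<bar>f z * g z\<bar> \<le> C1 * C2 * jbr z powr (real_of_int (k + l))" .
  qed (use C in auto)
qed


lemma poly_ord_deriv:
  "poly_ord k f \<Longrightarrow> \<exists>f'. poly_ord (k - 1) f' \<and> (\<forall>z. ((\<lambda>t. f (z + t *\<^sub>R e)) has_real_derivative f' z) (at 0))"
proof (induction rule: poly_ord.induct)
  case (poly_zero k)
  then show ?case by (intro exI[of _ "\<lambda>_. 0"]) (auto intro: poly_ord.intros)
next
  case (poly_const k c)
  then show ?case by (intro exI[of _ "\<lambda>_. 0"]) (auto intro: poly_ord.intros)
next
  case (poly_lin k a)
  show ?case
  proof (intro exI[of _ "\<lambda>_. inner a e"] conjI allI)
    show "poly_ord (k - 1) (\<lambda>_. inner a e)" using poly_lin by (intro poly_const) auto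
    fix z
    have "((\<lambda>t. inner a z + t * inner a e) has_real_derivative inner a e) (at 0)"
      by (auto intro!: derivative_eq_intros)
    then show "((\<lambda>t. inner a (z + t *\<^sub>R e)) has_real_derivative inner a e) (at 0)"
      by (simp add: inner_add_right)
  qed
next
  case (poly_add k f g)
  then obtain f' g' where "poly_ord (k-1) f'" "poly_ord (k-1) g'"
    "\<forall>z. ((\<lambda>t. f (z + t *\<^sub>R e)) has_real_derivative f' z) (at 0)"
    "\<forall>z. ((\<lambda>t. g (z + t *\<^sub>R e)) has_real_derivative g' z) (at 0)" by blast
  then show ?case
    by (intro exI[of _ "\<lambda>z. f' z + g' z"]) (auto intro: poly_ord.intros DERIV_add)
next
  case (poly_mult k f l g)
  then obtain f' g' where d: "poly_ord (k-1) f'" "poly_ord (l-1) g'"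
    "\<forall>z. ((\<lambda>t. f (z + t *\<^sub>R e)) has_real_derivative f' z) (at 0)"
    "\<forall>z. ((\<lambda>t. g (z + t *\<^sub>R e)) has_real_derivative g' z) (at 0)" by blast
  show ?case
  proof (intro exI[of _ "\<lambda>z. f' z * g z + f z * g' z"] conjI allI)
    have "poly_ord ((k-1) + l) (\<lambda>z. f' z * g z)" by (rule poly_ord.poly_mult) (use d poly_mult in auto)
    moreover have "poly_ord (k + (l-1)) (\<lambda>z. f z * g' z)" by (rule poly_ord.poly_mult) (use d poly_mult in auto)
    ultimately show "poly_ord (k + l - 1) (\<lambda>z. f' z * g z + f z * g' z)"
      by (intro poly_add) (auto simp: algebra_simps)
    fix z
    from DERIV_mult[OF d(3)[rule_format, of z] d(4)[rule_format, of z]]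
    show "((\<lambda>t. f (z + t *\<^sub>R e) * g (z + t *\<^sub>R e)) has_real_derivative f' z * g z + f z * g' z) (at 0)"
      by (simp add: mult.commute)
  qed
qed

definition deriv_chain :: "(nat \<Rightarrow> real \<Rightarrow> real) \<Rightarrow> bool" where
  "deriv_chain H \<longleftrightarrow> (\<forall>j x. 1/2 < x \<longrightarrow> (H j has_real_derivative H (Suc j) x) (at x))"

definition order_family :: "real \<Rightarrow> (nat \<Rightarrow> real \<Rightarrow> real) \<Rightarrow> bool" where
  "order_family m H \<longleftrightarrow> deriv_chain H \<and> (\<forall>j. \<exists>C. \<forall>x\<ge>1. \<bar>H j x\<bar> \<le> C * x powr (m - real j))"

text \<open>Coefficients of an \<open>n\<close>-th derivative of \<open>H 0 \<circ> \<lambda>\<close>: the coefficient of \<open>H j \<circ> \<lambda>\<close> is a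
  polynomial of order \<open>2j - n\<close>, and only \<open>j \<le> n\<close> occur.\<close>

definition lam_coeffs :: "nat \<Rightarrow> (nat \<Rightarrow> 'a::euclidean_space \<times> 'a \<Rightarrow> real) \<Rightarrow> bool" where
  "lam_coeffs n P \<longleftrightarrow> (\<forall>j. poly_ord (2 * int j - int n) (P j)) \<and> (\<forall>j>n. P j = (\<lambda>_. 0))"

lemma lam_term_deriv:
  assumes "deriv_chain H" and P: "((\<lambda>t. P (z + t *\<^sub>R e)) has_real_derivative P' z) (at 0)"
  shows "((\<lambda>t. H j (lam_of (z + t *\<^sub>R e)) * P (z + t *\<^sub>R e)) has_real_derivative
           H (Suc j) (lam_of z) * inner (lam_grad e) z * P z + H j (lam_of z) * P' z) (at 0)"
proof -
  have "(H j has_real_derivative H (Suc j) (lam_of z)) (at (lam_of (z + 0 *\<^sub>R e)))"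
    using assms(1) lam_of_ge1[of z] unfolding deriv_chain_def by simp
  from DERIV_chain2[OF this lam_of_deriv]
  have "((\<lambda>t. H j (lam_of (z + t *\<^sub>R e))) has_real_derivative
          H (Suc j) (lam_of z) * inner (lam_grad e) z) (at 0)" .
  from DERIV_mult[OF this P] show ?thesis by (simp add: mult.commute)
qed

lemma lam_coeffs_deriv:
  assumes P: "lam_coeffs n P"
  shows "\<exists>P'. (\<forall>j. poly_ord (2 * int j - int n - 1) (P' j)) \<and>
    (\<forall>j z. ((\<lambda>t. P j (z + t *\<^sub>R e)) has_real_derivative P' j z) (at 0)) \<and> (\<forall>j>n. P' j = (\<lambda>_. 0))"
proof -
  have "\<exists>f'. poly_ord (2 * int j - int n - 1) f' \<and>
      (\<forall>z. ((\<lambda>t. P j (z + t *\<^sub>R e)) has_real_derivative f' z) (at 0)) \<and> (n < j \<longrightarrow> f' = (\<lambda>_. 0))" for j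
  proof (cases "n < j")
    case True
    then show ?thesis using P by (intro exI[of _ "\<lambda>_. 0"]) (auto simp: lam_coeffs_def intro: poly_zero)
  next
    case False
    with poly_ord_deriv[of _ "P j" e] P show ?thesis by (auto simp: lam_coeffs_def)
  qed
  then show ?thesis by metis
qed

lemma lam_comp_deriv_step:
  fixes P :: "nat \<Rightarrow> 'a::euclidean_space \<times> 'a \<Rightarrow> real"
  assumes H: "deriv_chain H" and P: "lam_coeffs n P"
  shows "\<exists>Q. lam_coeffs (Suc n) Q \<and>
    (\<forall>z. ((\<lambda>t. \<Sum>j\<le>n. H j (lam_of (z + t *\<^sub>R e)) * P j (z + t *\<^sub>R e)) has_real_derivative
         (\<Sum>j\<le>Suc n. H j (lam_of z) * Q j z)) (at 0))"
proof -
  obtain P' where P': "\<And>j. poly_ord (2 * int j - int n - 1) (P' j)"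
    "\<And>j z. ((\<lambda>t. P j (z + t *\<^sub>R e)) has_real_derivative P' j z) (at 0)"
    "\<And>j. n < j \<Longrightarrow> P' j = (\<lambda>_. 0)"
    using lam_coeffs_deriv[OF P, of e] by blast
  define Q where "Q j = (\<lambda>z. (if j = 0 then 0 else inner (lam_grad e) z * P (j-1) z) + P' j z)" for j
  have "poly_ord (2 * int j - int (Suc n)) (Q j)" for j
  proof (cases j)
    case 0
    have "poly_ord (2 * int j - int (Suc n)) (P' 0)" by (rule poly_ord_mono[OF P'(1)[of 0]]) (simp add: 0)
    from poly_add[OF poly_zero this] show ?thesis unfolding Q_def using 0 by simp
  next
    case (Suc i)
    have "poly_ord (1 + (2 * int i - int n)) (\<lambda>z. inner (lam_grad e) z * P i z)"
      using P by (intro poly_mult poly_lin) (auto simp: lam_coeffs_def)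
    then have "poly_ord (2 * int j - int (Suc n)) (\<lambda>z. inner (lam_grad e) z * P i z)"
      using Suc by simp
    moreover have "poly_ord (2 * int j - int (Suc n)) (P' j)" by (rule poly_ord_mono[OF P'(1)[of j]]) simp
    ultimately show ?thesis unfolding Q_def using Suc by (simp add: poly_add)
  qed
  moreover have "Q j = (\<lambda>_. 0)" if "Suc n < j" for j
    unfolding Q_def using that P P'(3) by (auto simp: fun_eq_iff lam_coeffs_def)
  moreover have "((\<lambda>t. \<Sum>j\<le>n. H j (lam_of (z + t *\<^sub>R e)) * P j (z + t *\<^sub>R e)) has_real_derivative
         (\<Sum>j\<le>Suc n. H j (lam_of z) * Q j z)) (at 0)" for z
  proof -
    have "((\<lambda>t. \<Sum>j\<le>n. H j (lam_of (z + t *\<^sub>R e)) * P j (z + t *\<^sub>R e)) has_real_derivative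
        (\<Sum>j\<le>n. H (Suc j) (lam_of z) * inner (lam_grad e) z * P j z + H j (lam_of z) * P' j z)) (at 0)"
      by (intro DERIV_sum lam_term_deriv[OF H P'(2)])
    also have "(\<Sum>j\<le>n. H (Suc j) (lam_of z) * inner (lam_grad e) z * P j z + H j (lam_of z) * P' j z)
       = (\<Sum>j\<le>Suc n. H j (lam_of z) * Q j z)"
    proof -
      have "(\<Sum>j\<le>Suc n. H j (lam_of z) * (if j = 0 then 0 else inner (lam_grad e) z * P (j-1) z))
          = (\<Sum>j\<le>n. H (Suc j) (lam_of z) * inner (lam_grad e) z * P j z)"
        by (subst sum.atMost_Suc_shift) (simp add: mult.assoc)
      moreover have "(\<Sum>j\<le>Suc n. H j (lam_of z) * P' j z) = (\<Sum>j\<le>n. H j (lam_of z) * P' j z)"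
        using P'(3)[of "Suc n"] by simp
      ultimately show ?thesis unfolding Q_def by (simp add: sum.distrib distrib_left)
    qed
    finally show ?thesis .
  qed
  ultimately show ?thesis unfolding lam_coeffs_def by blast
qed

lemma iter_dderiv_lam_comp:
  fixes H :: "nat \<Rightarrow> real \<Rightarrow> real"
  assumes H: "deriv_chain H"
  shows "\<exists>P::nat \<Rightarrow> 'a::euclidean_space \<times> 'a \<Rightarrow> real. lam_coeffs (length es) P \<and>
    iter_dderiv es (\<lambda>z. H 0 (lam_of z)) = (\<lambda>z. \<Sum>j\<le>length es. H j (lam_of z) * P j z)"
proof (induction es)
  case Nil
  show ?case
    by (intro exI[of _ "\<lambda>j. if j = 0 then (\<lambda>_. 1) else (\<lambda>_. 0)"])
      (auto simp: lam_coeffs_def poly_const poly_zero)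
next
  case (Cons e es)
  then obtain P :: "nat \<Rightarrow> 'a \<times> 'a \<Rightarrow> real" where P: "lam_coeffs (length es) P"
    and eq: "iter_dderiv es (\<lambda>z. H 0 (lam_of z)) = (\<lambda>z. \<Sum>j\<le>length es. H j (lam_of z) * P j z)"
    by blast
  from lam_comp_deriv_step[OF H P, of e] obtain Q where Q: "lam_coeffs (Suc (length es)) Q"
    and dQ: "\<forall>z. ((\<lambda>t. \<Sum>j\<le>length es. H j (lam_of (z + t *\<^sub>R e)) * P j (z + t *\<^sub>R e)) has_real_derivative
         (\<Sum>j\<le>Suc (length es). H j (lam_of z) * Q j z)) (at 0)" by blast
  have "iter_dderiv (e # es) (\<lambda>z. H 0 (lam_of z)) = (\<lambda>z. \<Sum>j\<le>length (e # es). H j (lam_of z) * Q j z)"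
    unfolding iter_dderiv.simps eq dderiv_def using dQ by (auto intro!: DERIV_imp_deriv)
  with Q show ?case by auto
qed

lemma lam_term_bound:
  assumes H: "\<And>x. 1 \<le> x \<Longrightarrow> \<bar>H x\<bar> \<le> C * x powr (m - real j)"
    and P: "poly_ord (2 * int j - int n) P"
  shows "\<exists>K. \<forall>z. \<bar>H (lam_of z) * P z\<bar> \<le> K * jbr z powr (2 * m - real n)"
proof -
  obtain D where D: "D \<ge> 0" "\<And>z. \<bar>P z\<bar> \<le> D * jbr z powr (real_of_int (2 * int j - int n))"
    using poly_ord_bound[OF P] by blast
  have C': "\<bar>H x\<bar> \<le> \<bar>C\<bar> * x powr (m - real j)" if "1 \<le> x" for x
    using H[OF that] by (smt (verit) mult_right_mono powr_ge_zero)
  show ?thesis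
  proof (intro exI[of _ "\<bar>C\<bar> * 4 powr \<bar>m - real j\<bar> * D"] allI)
    fix z :: "'a \<times> 'a"
    have "\<bar>H (lam_of z) * P z\<bar> \<le> (\<bar>C\<bar> * lam_of z powr (m - real j))
          * (D * jbr z powr (real_of_int (2 * int j - int n)))"
      unfolding abs_mult using C'[OF lam_of_ge1[of z]] D(1) D(2)[of z] by (intro mult_mono) simp_all
    also have "\<dots> \<le> (\<bar>C\<bar> * (4 powr \<bar>m - real j\<bar> * jbr z powr (2 * (m - real j))))
          * (D * jbr z powr (real_of_int (2 * int j - int n)))"
      using D lam_of_powr_le[of z "m - real j"] by (intro mult_right_mono mult_left_mono) auto
    also have "\<dots> = \<bar>C\<bar> * 4 powr \<bar>m - real j\<bar> * D * jbr z powr (2 * m - real n)"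
      by (simp add: powr_add[symmetric] algebra_simps)
    finally show "\<bar>H (lam_of z) * P z\<bar> \<le> \<bar>C\<bar> * 4 powr \<bar>m - real j\<bar> * D * jbr z powr (2 * m - real n)" .
  qed
qed

lemma symbol_class_order_family:
  assumes "order_family m H"
  shows "symbol_class m (\<lambda>z::'a::euclidean_space \<times> 'a. H 0 (lam_of z))"
proof -
  have H: "deriv_chain H" and HB: "\<forall>j. \<exists>C. \<forall>x\<ge>1. \<bar>H j x\<bar> \<le> C * x powr (m - real j)"
    using assms unfolding order_family_def by auto
  have contH: "isCont (\<lambda>z::'a \<times> 'a. H j (lam_of z)) z" for j z
  proof (rule isCont_o2[where g="H j"])
    show "isCont lam_of z" using lam_of_cont continuous_on_eq_continuous_at by blast
    have "1/2 < lam_of z" using lam_of_ge1[of z] by linarith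
    then show "isCont (H j) (lam_of z)" using H unfolding deriv_chain_def by (meson DERIV_isCont)
  qed
  show ?thesis
    unfolding symbol_class_def smooth_fun_def
  proof (intro conjI allI impI ballI)
    fix es :: "('a \<times> 'a) list"
    obtain P where P: "lam_coeffs (length es) P"
      and eq: "iter_dderiv es (\<lambda>z. H 0 (lam_of z)) = (\<lambda>z. \<Sum>j\<le>length es. H j (lam_of z) * P j z)"
      using iter_dderiv_lam_comp[OF H, of es] by blast
    show "continuous_on UNIV (iter_dderiv es (\<lambda>z. H 0 (lam_of z)))"
      unfolding eq using P unfolding lam_coeffs_def
      by (intro continuous_on_sum continuous_on_mult ballI continuous_at_imp_continuous_on contH
           poly_ord_cont) auto
    show "(\<lambda>t. iter_dderiv es (\<lambda>z. H 0 (lam_of z)) (z + t *\<^sub>R e)) differentiable at 0" for e z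
      using lam_comp_deriv_step[OF H P, of e] unfolding eq
      by (meson has_field_derivative_imp_has_derivative differentiableI)
    have "\<forall>j. \<exists>K. \<forall>z. \<bar>H j (lam_of z) * P j z\<bar> \<le> K * jbr z powr (2 * m - real (length es))"
      using HB P lam_term_bound unfolding lam_coeffs_def by metis
    then obtain K where K: "\<And>j z. \<bar>H j (lam_of z) * P j z\<bar> \<le> K j * jbr z powr (2 * m - real (length es))"
      by metis
    show "\<exists>C. \<forall>z. \<bar>iter_dderiv es (\<lambda>z. H 0 (lam_of z)) z\<bar>
        \<le> C * sqrt (1 + (norm z)\<^sup>2) powr (2 * m - real (length es))"
    proof (intro exI[of _ "\<Sum>j\<le>length es. K j"] allI)
      fix z :: "'a \<times> 'a"
      have "\<bar>iter_dderiv es (\<lambda>z. H 0 (lam_of z)) z\<bar> \<le> (\<Sum>j\<le>length es. \<bar>H j (lam_of z) * P j z\<bar>)"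
        unfolding eq by (rule sum_abs)
      also have "\<dots> \<le> (\<Sum>j\<le>length es. K j * jbr z powr (2 * m - real (length es)))"
        by (intro sum_mono K)
      finally show "\<bar>iter_dderiv es (\<lambda>z. H 0 (lam_of z)) z\<bar>
          \<le> (\<Sum>j\<le>length es. K j) * sqrt (1 + (norm z)\<^sup>2) powr (2 * m - real (length es))"
        by (simp add: sum_distrib_right jbr_def)
    qed
  qed
qed


lemma order_family_mono:
  assumes "order_family m H" "m \<le> m'"
  shows "order_family m' H"
  unfolding order_family_def
proof (intro conjI allI)
  show "deriv_chain H" using assms(1) unfolding order_family_def by blast
  fix j
  obtain C where C: "\<forall>x\<ge>1. \<bar>H j x\<bar> \<le> C * x powr (m - real j)"
    using assms(1) unfolding order_family_def by blast
  show "\<exists>C. \<forall>x\<ge>1. \<bar>H j x\<bar> \<le> C * x powr (m' - real j)"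
  proof (intro exI[of _ "\<bar>C\<bar>"] allI impI)
    fix x :: real assume x: "1 \<le> x"
    have "\<bar>H j x\<bar> \<le> \<bar>C\<bar> * x powr (m - real j)"
      using C x by (smt (verit) mult_right_mono powr_ge_zero)
    also have "\<dots> \<le> \<bar>C\<bar> * x powr (m' - real j)"
      using x assms(2) by (intro mult_left_mono powr_mono) auto
    finally show "\<bar>H j x\<bar> \<le> \<bar>C\<bar> * x powr (m' - real j)" .
  qed
qed

lemma order_family_add:
  assumes "order_family m H" "order_family m G"
  shows "order_family m (\<lambda>j x. H j x + G j x)"
  unfolding order_family_def deriv_chain_def
proof (intro conjI allI impI)
  show "((\<lambda>x. H j x + G j x) has_real_derivative H (Suc j) x + G (Suc j) x) (at x)" if "1/2 < x" for j x
    using assms that unfolding order_family_def deriv_chain_def by (auto intro: DERIV_add)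
  fix j
  obtain C D where "\<forall>x\<ge>1. \<bar>H j x\<bar> \<le> C * x powr (m - real j)" "\<forall>x\<ge>1. \<bar>G j x\<bar> \<le> D * x powr (m - real j)"
    using assms unfolding order_family_def by blast
  then show "\<exists>C. \<forall>x\<ge>1. \<bar>H j x + G j x\<bar> \<le> C * x powr (m - real j)"
    by (intro exI[of _ "C + D"]) (smt (verit, best) distrib_right)
qed

lemma order_family_scale:
  assumes "order_family m H"
  shows "order_family m (\<lambda>j x. c * H j x)"
  unfolding order_family_def deriv_chain_def
proof (intro conjI allI impI)
  show "((\<lambda>x. c * H j x) has_real_derivative c * H (Suc j) x) (at x)" if "1/2 < x" for j x
    using assms that unfolding order_family_def deriv_chain_def by (auto intro: DERIV_cmult)
  fix j
  obtain C where "\<forall>x\<ge>1. \<bar>H j x\<bar> \<le> C * x powr (m - real j)"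
    using assms unfolding order_family_def by blast
  then show "\<exists>C. \<forall>x\<ge>1. \<bar>c * H j x\<bar> \<le> C * x powr (m - real j)"
    by (intro exI[of _ "\<bar>c\<bar> * C"]) (simp add: abs_mult mult.assoc mult_left_mono)
qed

lemma order_family_sum:
  assumes "\<And>i. i \<in> I \<Longrightarrow> order_family m (H i)" "finite I"
  shows "order_family m (\<lambda>j x. \<Sum>i\<in>I. H i j x)"
  using assms(2,1)
proof (induction I rule: finite_induct)
  case empty
  show ?case unfolding order_family_def deriv_chain_def by (auto intro!: exI[of _ 0])
next
  case (insert i I)
  then show ?case by (simp add: order_family_add)
qed

definition const_family :: "real \<Rightarrow> nat \<Rightarrow> real \<Rightarrow> real" where
  "const_family c j x = (if j = 0 then c else 0)"

lemma order_family_const: "order_family 0 (const_family c)"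
  unfolding order_family_def deriv_chain_def
proof (intro conjI allI impI)
  show "(const_family c j has_real_derivative const_family c (Suc j) x) (at x)" for j x
    unfolding const_family_def by (cases "j = 0") auto
  show "\<exists>C. \<forall>x\<ge>1. \<bar>const_family c j x\<bar> \<le> C * x powr (0 - real j)" for j
    by (intro exI[of _ "\<bar>c\<bar>"]) (auto simp: const_family_def)
qed

definition powr_family :: "real \<Rightarrow> nat \<Rightarrow> real \<Rightarrow> real" where
  "powr_family p j x = (\<Prod>i<j. (p - real i)) * x powr (p - real j)"

lemma order_family_powr: "order_family p (powr_family p)"
  unfolding order_family_def deriv_chain_def
proof (intro conjI allI impI)
  fix j :: nat and x :: real assume x: "1/2 < x"
  have "((\<lambda>x. (\<Prod>i<j. (p - real i)) * x powr (p - real j)) has_real_derivative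
      (\<Prod>i<j. (p - real i)) * ((p - real j) * x powr (p - real j - 1))) (at x)"
    using x by (auto intro!: derivative_eq_intros)
  moreover have "(\<Prod>i<j. (p - real i)) * ((p - real j) * x powr (p - real j - 1)) = powr_family p (Suc j) x"
    by (simp add: powr_family_def algebra_simps)
  ultimately show "(powr_family p j has_real_derivative powr_family p (Suc j) x) (at x)"
    unfolding powr_family_def[abs_def] by simp
next
  show "\<exists>C. \<forall>x\<ge>1. \<bar>powr_family p j x\<bar> \<le> C * x powr (p - real j)" for j
    by (intro exI[of _ "\<bar>\<Prod>i<j. (p - real i)\<bar>"]) (auto simp: powr_family_def abs_mult)
qed

text \<open>Euler's integral in the form
  \<open>\<integral>\<^sub>0\<^sup>\<infinity> w\<^sup>\<beta>\<^sup>-\<^sup>1 e\<^sup>-\<^sup>c\<^sup>w dw = \<Gamma>(\<beta>) c\<^sup>-\<^sup>\<beta>\<close>, obtained from the library's \<open>Gamma_integral_real\<close> by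
  scaling \<open>w \<mapsto> c w\<close>.\<close>

lemma gamma_bochner_integral:
  fixes \<beta> :: real
  assumes b: "0 < \<beta>"
  shows "has_bochner_integral lborel (\<lambda>t. indicator {0..} t * (t powr (\<beta> - 1) / exp t)) (Gamma \<beta>)"
proof (rule has_bochner_integral_nn_integral)
  have "((\<lambda>t. t powr (\<beta> - 1) / exp t) has_integral Gamma \<beta>) {0..}"
    by (rule Gamma_integral_real[OF b])
  then show "integral\<^sup>N lborel (\<lambda>t. ennreal (indicator {0..} t * (t powr (\<beta> - 1) / exp t))) = ennreal (Gamma \<beta>)"
    by (rule nn_integral_has_integral_lebesgue[rotated]) auto
qed (use b in \<open>auto simp: Gamma_real_pos less_imp_le\<close>)

lemma gamma_has_integral:
  fixes \<beta> c :: real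
  assumes b: "0 < \<beta>" and c: "0 < c"
  shows "has_bochner_integral lborel (\<lambda>w. indicator {0<..} w * w powr (\<beta> - 1) * exp (- (c * w)))
           (Gamma \<beta> * c powr (- \<beta>))"
proof -
  define g where "g t = indicator {0..} t * (t powr (\<beta> - 1) / exp t)" for t :: real
  have gi: "integrable lborel g" and gv: "integral\<^sup>L lborel g = Gamma \<beta>"
    using gamma_bochner_integral[OF b] unfolding g_def[abs_def] by (auto simp: has_bochner_integral_iff)
  have gi': "integrable lborel (\<lambda>w. g (0 + c * w))"
    using lborel_integrable_real_affine[OF gi, of c 0] c by simp
  have gv': "integral\<^sup>L lborel g = c * (\<integral>w. g (0 + c * w) \<partial>lborel)"
    using lborel_integral_real_affine[of c g 0] c by simp
  have eqf: "indicator {0<..} w * w powr (\<beta> - 1) * exp (- (c * w)) = g (0 + c * w) / c powr (\<beta> - 1)" for w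
  proof (cases "0 < w")
    case True
    then show ?thesis using c
      by (simp add: g_def indicator_def powr_mult exp_minus field_simps)
  next
    case False
    then show ?thesis using c by (cases "w = 0") (auto simp: g_def indicator_def zero_le_mult_iff)
  qed
  have "integrable lborel (\<lambda>w. g (0 + c * w) / c powr (\<beta> - 1))"
    using gi' by simp
  moreover have "(\<integral>w. g (0 + c * w) / c powr (\<beta> - 1) \<partial>lborel) = Gamma \<beta> * c powr (- \<beta>)"
  proof -
    have "(\<integral>w. g (0 + c * w) / c powr (\<beta> - 1) \<partial>lborel) = (\<integral>w. g (0 + c * w) \<partial>lborel) / c powr (\<beta> - 1)"
      by simp
    also have "(\<integral>w. g (0 + c * w) \<partial>lborel) = Gamma \<beta> / c" using gv gv' c by (simp add: field_simps)
    finally show ?thesis using c by (simp add: powr_diff powr_minus field_simps)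
  qed
  ultimately show ?thesis unfolding eqf by (simp add: has_bochner_integral_iff)
qed

lemma gamma_integrable:
  fixes \<gamma> y :: real
  assumes "-1 < \<gamma>" "0 < y"
  shows "integrable lborel (\<lambda>w. indicator {0<..} w * w powr \<gamma> * exp (- (y * w)))"
  using gamma_has_integral[of "\<gamma> + 1" y] assms by (simp add: has_bochner_integral_iff)

lemma gamma_integral:
  fixes \<gamma> y :: real
  assumes "-1 < \<gamma>" "0 < y"
  shows "(\<integral>w. indicator {0<..} w * w powr \<gamma> * exp (- (y * w)) \<partial>lborel) = Gamma (\<gamma> + 1) * y powr (- (\<gamma> + 1))"
  using gamma_has_integral[of "\<gamma> + 1" y] assms by (simp add: has_bochner_integral_iff)

text \<open>Differentiation under the integral sign for Laplace-type integrals rests on a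
  second-order estimate for the exponential.\<close>

lemma exp_quad_bound: "\<bar>exp u - 1 - u\<bar> \<le> u\<^sup>2 / 2 * exp \<bar>u\<bar>" for u :: real
proof -
  obtain t where t: "\<bar>t\<bar> \<le> \<bar>u\<bar>" "exp u = (\<Sum>m<2. u ^ m / fact m) + exp t / fact 2 * u ^ 2"
    using Maclaurin_exp_le[of u 2] by blast
  have e: "exp u - 1 - u = exp t / 2 * u\<^sup>2" using t(2) by (simp add: numeral_2_eq_2)
  have nn: "0 \<le> exp t / 2 * u\<^sup>2" by simp
  have "\<bar>exp u - 1 - u\<bar> = exp t / 2 * u\<^sup>2" unfolding e by (rule abs_of_nonneg[OF nn])
  moreover have "exp t / 2 * u\<^sup>2 \<le> exp \<bar>u\<bar> / 2 * u\<^sup>2" using t(1) by (intro mult_right_mono divide_right_mono) auto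
  ultimately show ?thesis by (simp add: mult_ac)
qed

lemma exp_diff_bound:
  fixes w x h :: real
  assumes "0 < w" "\<bar>h\<bar> \<le> x / 2"
  shows "\<bar>exp (- (2 * (x + h) * w)) - exp (- (2 * x * w)) + 2 * w * h * exp (- (2 * x * w))\<bar>
    \<le> 2 * w\<^sup>2 * h\<^sup>2 * exp (- (x * w))"
proof -
  let ?u = "- (2 * w * h)"
  have eq: "exp (- (2 * (x + h) * w)) - exp (- (2 * x * w)) + 2 * w * h * exp (- (2 * x * w))
      = exp (- (2 * x * w)) * (exp ?u - 1 - ?u)"
    by (simp add: algebra_simps exp_add[symmetric])
  have "\<bar>exp (- (2 * x * w)) * (exp ?u - 1 - ?u)\<bar> = exp (- (2 * x * w)) * \<bar>exp ?u - 1 - ?u\<bar>"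
    by (simp add: abs_mult)
  also have "\<dots> \<le> exp (- (2 * x * w)) * (?u\<^sup>2 / 2 * exp \<bar>?u\<bar>)"
    by (intro mult_left_mono exp_quad_bound) auto
  also have "\<dots> = 2 * w\<^sup>2 * h\<^sup>2 * (exp (- (2 * x * w)) * exp \<bar>?u\<bar>)"
    by (simp add: power2_eq_square algebra_simps)
  also have "\<dots> = 2 * w\<^sup>2 * h\<^sup>2 * exp (- (2 * x * w) + \<bar>?u\<bar>)"
    by (simp only: exp_add)
  also have "\<dots> \<le> 2 * w\<^sup>2 * h\<^sup>2 * exp (- (x * w))"
  proof -
    have "\<bar>?u\<bar> = 2 * w * \<bar>h\<bar>" using assms by (simp add: abs_mult)
    also have "\<dots> \<le> 2 * w * (x/2)" using assms by (intro mult_left_mono) auto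
    finally have "- (2 * x * w) + \<bar>?u\<bar> \<le> - (x * w)" by simp
    then show ?thesis by (intro mult_left_mono) auto
  qed
  finally show ?thesis using eq by simp
qed


lemma has_real_derivative_quadratic_remainder:
  fixes f :: "real \<Rightarrow> real"
  assumes \<delta>: "0 < \<delta>" and rem: "\<And>h. \<bar>h\<bar> \<le> \<delta> \<Longrightarrow> \<bar>f (x + h) - f x - h * D\<bar> \<le> h\<^sup>2 * M"
  shows "(f has_real_derivative D) (at x)"
proof -
  have "((\<lambda>h. (f (x + h) - f x) / h - D) \<longlongrightarrow> 0) (at 0)"
  proof (rule Lim_null_comparison)
    show "((\<lambda>h. M * \<bar>h\<bar>) \<longlongrightarrow> 0) (at 0)"
      by (auto intro!: tendsto_eq_intros)
    have "norm ((f (x + h) - f x) / h - D) \<le> M * \<bar>h\<bar>" if h: "\<bar>h\<bar> \<le> \<delta>" "h \<noteq> 0" for h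
    proof -
      have "norm ((f (x + h) - f x) / h - D) = \<bar>f (x + h) - f x - h * D\<bar> / \<bar>h\<bar>"
        using h by (simp add: field_simps)
      also have "\<dots> \<le> h\<^sup>2 * M / \<bar>h\<bar>" using rem[OF h(1)] by (intro divide_right_mono) auto
      also have "\<dots> = M * \<bar>h\<bar>" using h by (simp add: power2_eq_square field_simps abs_mult_self_eq)
      finally show ?thesis .
    qed
    moreover have "eventually (\<lambda>h. h \<noteq> 0 \<and> \<bar>h\<bar> < \<delta>) (at (0::real))"
      unfolding eventually_at using \<delta> by (intro exI[of _ \<delta>]) (auto simp: dist_real_def)
    ultimately show "eventually (\<lambda>h. norm ((f (x + h) - f x) / h - D) \<le> M * \<bar>h\<bar>) (at 0)"
      by (auto elim!: eventually_mono)
  qed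
  then show ?thesis unfolding DERIV_def by (rule LIM_zero_cancel)
qed

text \<open>Derivative of \<open>x \<mapsto> \<integral> K(w) (e\<^sup>-\<^sup>2\<^sup>x\<^sup>w - E(w)) dw\<close> for a kernel supported in \<open>w > 0\<close> with
  integrable first and second moments against exponentials; the counterterm \<open>E\<close> (independent
  of \<open>x\<close>) allows kernels that are not integrable near \<open>0\<close>.\<close>

lemma laplace_has_derivative:
  fixes K E :: "real \<Rightarrow> real"
  assumes supp: "\<And>w. K w \<noteq> 0 \<Longrightarrow> 0 < w"
    and I1: "\<And>y. 0 < y \<Longrightarrow> integrable lborel (\<lambda>w. w * K w * exp (- (y * w)))"
    and I2: "\<And>y. 0 < y \<Longrightarrow> integrable lborel (\<lambda>w. w\<^sup>2 * K w * exp (- (y * w)))"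
    and IE: "\<And>y. 0 < y \<Longrightarrow> integrable lborel (\<lambda>w. K w * (exp (- (2 * y * w)) - E w))"
    and x: "0 < x"
  shows "((\<lambda>x. \<integral>w. K w * (exp (- (2 * x * w)) - E w) \<partial>lborel) has_real_derivative
           (\<integral>w. - 2 * w * K w * exp (- (2 * x * w)) \<partial>lborel)) (at x)"
proof (rule has_real_derivative_quadratic_remainder)
  define \<Phi> where "\<Phi> x = (\<integral>w. K w * (exp (- (2 * x * w)) - E w) \<partial>lborel)" for x
  define D where "D = (\<integral>w. - 2 * w * K w * exp (- (2 * x * w)) \<partial>lborel)"
  define M where "M = (\<integral>w. 2 * \<bar>w\<^sup>2 * K w * exp (- (x * w))\<bar> \<partial>lborel)"
  define R where "R h w = K w * (exp (- (2 * (x + h) * w)) - exp (- (2 * x * w)) + 2 * w * h * exp (- (2 * x * w)))"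
    for h w
  show "0 < x / 2" using x by simp
  fix h :: real assume h: "\<bar>h\<bar> \<le> x / 2"
  have xh: "0 < x + h" using h x by linarith
  have intD: "integrable lborel (\<lambda>w. - 2 * w * K w * exp (- (2 * x * w)))"
    using I1[of "2 * x"] x by (simp add: mult.assoc)
  have R_eq: "K w * (exp (- (2 * (x + h) * w)) - E w) - K w * (exp (- (2 * x * w)) - E w)
      - h * (- 2 * w * K w * exp (- (2 * x * w))) = R h w" for w
    unfolding R_def by (simp add: algebra_simps)
  have intR: "integrable lborel (R h)"
    using IE[OF xh] IE[OF x] intD unfolding R_eq[symmetric] by auto
  have "\<Phi> (x + h) - \<Phi> x - h * D = (\<integral>w. R h w \<partial>lborel)"
    unfolding \<Phi>_def D_def R_eq[symmetric] using IE[OF xh] IE[OF x] intD by (simp add: integral_diff)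
  also have "\<bar>\<dots>\<bar> \<le> (\<integral>w. h\<^sup>2 * (2 * \<bar>w\<^sup>2 * K w * exp (- (x * w))\<bar>) \<partial>lborel)"
  proof (rule integral_abs_bound_integral[OF intR])
    show "integrable lborel (\<lambda>w. h\<^sup>2 * (2 * \<bar>w\<^sup>2 * K w * exp (- (x * w))\<bar>))"
      using I2[OF x] by simp
    show "\<bar>R h w\<bar> \<le> h\<^sup>2 * (2 * \<bar>w\<^sup>2 * K w * exp (- (x * w))\<bar>)" for w
    proof (cases "K w = 0")
      case False
      then have w: "0 < w" using supp by blast
      have "\<bar>R h w\<bar> \<le> \<bar>K w\<bar> * (2 * w\<^sup>2 * h\<^sup>2 * exp (- (x * w)))"
        unfolding R_def abs_mult by (intro mult_left_mono exp_diff_bound w h) auto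
      then show ?thesis by (simp add: abs_mult algebra_simps)
    qed (simp add: R_def)
  qed
  also have "\<dots> = h\<^sup>2 * M" unfolding M_def by simp
  finally show "\<bar>(\<lambda>x. \<integral>w. K w * (exp (- (2 * x * w)) - E w) \<partial>lborel) (x + h)
      - (\<lambda>x. \<integral>w. K w * (exp (- (2 * x * w)) - E w) \<partial>lborel) x
      - h * (\<integral>w. - 2 * w * K w * exp (- (2 * x * w)) \<partial>lborel)\<bar> \<le> h\<^sup>2 * M"
    unfolding \<Phi>_def D_def .
qed

definition laplace :: "(real \<Rightarrow> real) \<Rightarrow> real \<Rightarrow> real" where
  "laplace K x = (\<integral>w. K w * exp (- (2 * x * w)) \<partial>lborel)"

definition kernel_dom :: "(real \<Rightarrow> real) \<Rightarrow> real \<Rightarrow> real \<Rightarrow> bool" where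
  "kernel_dom K A \<gamma> \<longleftrightarrow> (\<forall>w. \<bar>K w\<bar> \<le> A * (indicator {0<..} w * w powr \<gamma>))"

lemma kernel_dom_support: "kernel_dom K A \<gamma> \<Longrightarrow> K w \<noteq> 0 \<Longrightarrow> 0 < w"
proof (rule ccontr)
  assume d: "kernel_dom K A \<gamma>" and K: "K w \<noteq> 0" and w: "\<not> 0 < w"
  have "\<bar>K w\<bar> \<le> A * (indicator {0<..} w * w powr \<gamma>)" using d unfolding kernel_dom_def by blast
  also have "\<dots> = 0" using w by simp
  finally show False using K by simp
qed

lemma kernel_dom_pos: "kernel_dom K A \<gamma> \<Longrightarrow> 0 < w \<Longrightarrow> \<bar>K w\<bar> \<le> A * w powr \<gamma>"
  unfolding kernel_dom_def by (metis indicator_simps(1) greaterThan_iff mult_1)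

lemma kernel_dom_integrable:
  assumes Km: "K \<in> borel_measurable borel" and d: "kernel_dom K A \<gamma>" and g: "-1 < \<gamma>" and y: "0 < y"
  shows "integrable lborel (\<lambda>w. w ^ n * K w * exp (- (y * w)))"
proof (rule Bochner_Integration.integrable_bound)
  show "integrable lborel (\<lambda>w. A * (indicator {0<..} w * w powr (\<gamma> + real n) * exp (- (y * w))))"
    using gamma_integrable[of "\<gamma> + real n" y] g y by simp
  show "(\<lambda>w. w ^ n * K w * exp (- (y * w))) \<in> borel_measurable lborel" using Km by measurable
  show "AE w in lborel. norm (w ^ n * K w * exp (- (y * w)))
      \<le> norm (A * (indicator {0<..} w * w powr (\<gamma> + real n) * exp (- (y * w))))"
  proof (intro AE_I2)
    fix w :: real
    show "norm (w ^ n * K w * exp (- (y * w))) \<le> norm (A * (indicator {0<..} w * w powr (\<gamma> + real n) * exp (- (y * w))))"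
    proof (cases "0 < w")
      case True
      have "norm (w ^ n * K w * exp (- (y * w))) = w ^ n * \<bar>K w\<bar> * exp (- (y * w))"
        using True by (simp add: abs_mult)
      also have "\<dots> \<le> w ^ n * (A * w powr \<gamma>) * exp (- (y * w))"
        using kernel_dom_pos[OF d True] True by (intro mult_right_mono mult_left_mono) auto
      also have "\<dots> = A * (w powr (\<gamma> + real n) * exp (- (y * w)))"
        using True by (simp add: powr_add powr_realpow)
      also have "\<dots> \<le> norm (A * (indicator {0<..} w * w powr (\<gamma> + real n) * exp (- (y * w))))"
        using True by simp
      finally show ?thesis .
    next
      case False
      then have "K w = 0" using kernel_dom_support[OF d] by blast
      then show ?thesis by simp
    qed
  qed
qed

lemma laplace_bound:
  assumes Km: "K \<in> borel_measurable borel" and d: "kernel_dom K A \<gamma>" and g: "-1 < \<gamma>" and x: "0 < x"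
  shows "\<bar>laplace K x\<bar> \<le> A * Gamma (\<gamma> + 1) * (2 * x) powr (- (\<gamma> + 1))"
proof -
  have "\<bar>laplace K x\<bar> \<le> (\<integral>w. A * (indicator {0<..} w * w powr \<gamma> * exp (- ((2 * x) * w))) \<partial>lborel)"
    unfolding laplace_def
  proof (rule integral_abs_bound_integral)
    show "integrable lborel (\<lambda>w. K w * exp (- (2 * x * w)))"
      using kernel_dom_integrable[OF Km d g, of "2 * x" 0] x by simp
    show "integrable lborel (\<lambda>w. A * (indicator {0<..} w * w powr \<gamma> * exp (- (2 * x * w))))"
      using gamma_integrable[of \<gamma> "2 * x"] g x by simp
    fix w :: real
    show "\<bar>K w * exp (- (2 * x * w))\<bar> \<le> A * (indicator {0<..} w * w powr \<gamma> * exp (- (2 * x * w)))"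
      using d unfolding kernel_dom_def by (simp add: abs_mult mult_right_mono mult.assoc[symmetric])
  qed
  also have "\<dots> = A * Gamma (\<gamma> + 1) * (2 * x) powr (- (\<gamma> + 1))"
    using gamma_integral[of \<gamma> "2 * x"] g x by simp
  finally show ?thesis .
qed


definition laplace_derivs :: "(real \<Rightarrow> real) \<Rightarrow> nat \<Rightarrow> real \<Rightarrow> real" where
  "laplace_derivs K k = laplace (\<lambda>w. (- 2 * w) ^ k * K w)"

lemma laplace_derivs_0: "laplace_derivs K 0 = laplace K"
  unfolding laplace_derivs_def by simp

lemma kernel_dom_pow:
  assumes "kernel_dom K A \<gamma>"
  shows "kernel_dom (\<lambda>w. (- 2 * w) ^ k * K w) (2 ^ k * A) (\<gamma> + real k)"
  unfolding kernel_dom_def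
proof
  fix w :: real
  show "\<bar>(- 2 * w) ^ k * K w\<bar> \<le> 2 ^ k * A * (indicator {0<..} w * w powr (\<gamma> + real k))"
  proof (cases "0 < w")
    case True
    have "\<bar>(- 2 * w) ^ k * K w\<bar> = 2 ^ k * w ^ k * \<bar>K w\<bar>"
      using True by (simp add: abs_mult power_abs power_mult_distrib)
    also have "\<dots> \<le> 2 ^ k * w ^ k * (A * w powr \<gamma>)"
      using kernel_dom_pos[OF assms True] True by (intro mult_left_mono) auto
    also have "\<dots> = 2 ^ k * A * (indicator {0<..} w * w powr (\<gamma> + real k))"
      using True by (simp add: powr_add powr_realpow)
    finally show ?thesis .
  next
    case False
    then have "K w = 0" using kernel_dom_support[OF assms] by blast
    then show ?thesis using False by simp
  qed
qed

lemma laplace_derivs_deriv: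
  assumes Km: "K \<in> borel_measurable borel" and d: "kernel_dom K A \<gamma>" and g: "-1 < \<gamma>" and x: "0 < x"
  shows "(laplace_derivs K k has_real_derivative laplace_derivs K (Suc k) x) (at x)"
proof -
  let ?K = "\<lambda>w. (- 2 * w) ^ k * K w"
  have Km': "?K \<in> borel_measurable borel" using Km by measurable
  have d': "kernel_dom ?K (2 ^ k * A) (\<gamma> + real k)" by (rule kernel_dom_pow[OF d])
  have g': "-1 < \<gamma> + real k" using g by simp
  have "((\<lambda>x. \<integral>w. ?K w * (exp (- (2 * x * w)) - 0) \<partial>lborel) has_real_derivative
           (\<integral>w. - 2 * w * ?K w * exp (- (2 * x * w)) \<partial>lborel)) (at x)"
  proof (rule laplace_has_derivative[OF _ _ _ _ x])
    show "?K w \<noteq> 0 \<Longrightarrow> 0 < w" for w using kernel_dom_support[OF d'] by blast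
    show "integrable lborel (\<lambda>w. w * ?K w * exp (- (y * w)))" if "0 < y" for y
      using kernel_dom_integrable[OF Km' d' g' that, of 1] by simp
    show "integrable lborel (\<lambda>w. w\<^sup>2 * ?K w * exp (- (y * w)))" if "0 < y" for y
      using kernel_dom_integrable[OF Km' d' g' that, of 2] by simp
    show "integrable lborel (\<lambda>w. ?K w * (exp (- (2 * y * w)) - 0))" if "0 < y" for y
      using kernel_dom_integrable[OF Km' d' g', of "2 * y" 0] that by simp
  qed
  moreover have "(\<lambda>x. \<integral>w. ?K w * (exp (- (2 * x * w)) - 0) \<partial>lborel) = laplace ?K"
    by (simp add: laplace_def fun_eq_iff)
  moreover have "(\<integral>w. - 2 * w * ?K w * exp (- (2 * x * w)) \<partial>lborel) = laplace (\<lambda>w. (- 2 * w) ^ Suc k * K w) x"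
    unfolding laplace_def by (intro Bochner_Integration.integral_cong) (auto simp: mult_ac)
  ultimately show ?thesis unfolding laplace_derivs_def by simp
qed

lemma order_family_laplace:
  assumes Km: "K \<in> borel_measurable borel" and d: "kernel_dom K A \<gamma>" and g: "-1 < \<gamma>"
  shows "order_family (- (\<gamma> + 1)) (laplace_derivs K)"
  unfolding order_family_def deriv_chain_def
proof (intro conjI allI impI)
  fix j :: nat and x :: real assume "1/2 < x"
  then show "(laplace_derivs K j has_real_derivative laplace_derivs K (Suc j) x) (at x)"
    by (intro laplace_derivs_deriv[OF Km d g]) auto
next
  fix j :: nat
  have Km': "(\<lambda>w. (- 2 * w) ^ j * K w) \<in> borel_measurable borel" using Km by measurable
  show "\<exists>C. \<forall>x\<ge>1. \<bar>laplace_derivs K j x\<bar> \<le> C * x powr (- (\<gamma> + 1) - real j)"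
  proof (intro exI[of _ "2 ^ j * A * Gamma (\<gamma> + real j + 1) * 2 powr (- (\<gamma> + real j + 1))"] allI impI)
    fix x :: real assume x: "1 \<le> x"
    have "\<bar>laplace_derivs K j x\<bar> \<le> 2 ^ j * A * Gamma (\<gamma> + real j + 1) * (2 * x) powr (- (\<gamma> + real j + 1))"
      unfolding laplace_derivs_def using laplace_bound[OF Km' kernel_dom_pow[OF d] _, of x] g x by simp
    also have "\<dots> = 2 ^ j * A * Gamma (\<gamma> + real j + 1) * 2 powr (- (\<gamma> + real j + 1)) * x powr (- (\<gamma> + 1) - real j)"
      using x by (simp add: powr_mult algebra_simps)
    finally show "\<bar>laplace_derivs K j x\<bar> \<le> 2 ^ j * A * Gamma (\<gamma> + real j + 1) * 2 powr (- (\<gamma> + real j + 1)) * x powr (- (\<gamma> + 1) - real j)" .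
  qed
qed

lemma binomial_Suc_split: "Suc n choose k = (n choose k) + (if k = 0 then 0 else (n choose (k-1)))"
  by (cases k) simp_all

lemma leibniz_derivs:
  fixes f g :: "nat \<Rightarrow> real \<Rightarrow> real"
  assumes f: "\<And>m. (f m has_real_derivative f (Suc m) t) (at t)"
      and g: "\<And>m. (g m has_real_derivative g (Suc m) t) (at t)"
  shows "((\<lambda>t. \<Sum>i\<le>n. real (n choose i) * f i t * g (n - i) t) has_real_derivative
           (\<Sum>i\<le>Suc n. real (Suc n choose i) * f i t * g (Suc n - i) t)) (at t)"
proof -
  have "((\<lambda>t. \<Sum>i\<le>n. real (n choose i) * f i t * g (n - i) t) has_real_derivative
           (\<Sum>i\<le>n. real (n choose i) * (f (Suc i) t * g (n - i) t + f i t * g (Suc (n - i)) t))) (at t)"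
    by (intro DERIV_sum) (auto intro!: derivative_eq_intros f g simp: algebra_simps)
  also have "(\<Sum>i\<le>n. real (n choose i) * (f (Suc i) t * g (n - i) t + f i t * g (Suc (n - i)) t))
     = (\<Sum>i\<le>Suc n. real (Suc n choose i) * f i t * g (Suc n - i) t)"
  proof -
    have A: "(\<Sum>i\<le>Suc n. real (if i = 0 then 0 else n choose (i - 1)) * f i t * g (Suc n - i) t)
        = (\<Sum>i\<le>n. real (n choose i) * f (Suc i) t * g (n - i) t)"
      by (subst sum.atMost_Suc_shift) simp
    have B: "(\<Sum>i\<le>Suc n. real (n choose i) * f i t * g (Suc n - i) t)
        = (\<Sum>i\<le>n. real (n choose i) * f i t * g (Suc (n - i)) t)"
      by (simp add: Suc_diff_le)
    have "(\<Sum>i\<le>Suc n. real (Suc n choose i) * f i t * g (Suc n - i) t)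
        = (\<Sum>i\<le>Suc n. real (n choose i) * f i t * g (Suc n - i) t)
          + (\<Sum>i\<le>Suc n. real (if i = 0 then 0 else n choose (i - 1)) * f i t * g (Suc n - i) t)"
      by (subst sum.distrib[symmetric]) (intro sum.cong refl, simp add: binomial_Suc_split algebra_simps)
    then show ?thesis unfolding A B by (simp add: sum.distrib algebra_simps)
  qed
  finally show ?thesis .
qed

definition pow_derivs :: "real \<Rightarrow> nat \<Rightarrow> real \<Rightarrow> real" where
  "pow_derivs q m w = (\<Prod>i<m. (q - real i)) * (1 + w) powr (q - real m)"

lemma pow_derivs_deriv:
  assumes "-1 < w"
  shows "(pow_derivs q m has_real_derivative pow_derivs q (Suc m) w) (at w)"
proof -
  have "((\<lambda>w. (\<Prod>i<m. (q - real i)) * (1 + w) powr (q - real m)) has_real_derivative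
      (\<Prod>i<m. (q - real i)) * ((q - real m) * (1 + w) powr (q - real m - 1))) (at w)"
    using assms by (auto intro!: derivative_eq_intros)
  moreover have "(\<Prod>i<m. (q - real i)) * ((q - real m) * (1 + w) powr (q - real m - 1)) = pow_derivs q (Suc m) w"
    by (simp add: pow_derivs_def algebra_simps)
  ultimately show ?thesis unfolding pow_derivs_def[abs_def] by simp
qed

definition exp_derivs :: "nat \<Rightarrow> real \<Rightarrow> real" where
  "exp_derivs m w = 2 ^ m * exp (2 * w)"

lemma exp_derivs_deriv: "(exp_derivs m has_real_derivative exp_derivs (Suc m) w) (at w)"
  unfolding exp_derivs_def[abs_def] by (auto intro!: derivative_eq_intros)

definition gq :: "real \<Rightarrow> real \<Rightarrow> real" where
  "gq q w = (1 + w) powr q * exp (2 * w)"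

definition gq_derivs :: "real \<Rightarrow> nat \<Rightarrow> real \<Rightarrow> real" where
  "gq_derivs q n w = (\<Sum>i\<le>n. real (n choose i) * pow_derivs q i w * exp_derivs (n - i) w)"

lemma gq_derivs_deriv: "-1 < w \<Longrightarrow> (gq_derivs q n has_real_derivative gq_derivs q (Suc n) w) (at w)"
  unfolding gq_derivs_def[abs_def] by (rule leibniz_derivs[where f="pow_derivs q" and g=exp_derivs, OF pow_derivs_deriv exp_derivs_deriv])

lemma gq_derivs_0: "gq_derivs q 0 = gq q"
  by (simp add: fun_eq_iff gq_derivs_def gq_def pow_derivs_def exp_derivs_def)

definition gq_coeff :: "real \<Rightarrow> nat \<Rightarrow> real" where
  "gq_coeff q i = gq_derivs q i 0 / fact i"

lemma gq_coeff_0: "gq_coeff q 0 = 1"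
  by (simp add: gq_coeff_def gq_derivs_0 gq_def)

text \<open>Taylor's theorem with Lagrange remainder, and continuity of \<open>g\<^sub>q\<^sup>(\<^sup>N\<^sup>+\<^sup>1\<^sup>)\<close> on \<open>[0,b]\<close>.\<close>

lemma gq_taylor_remainder_bounded:
  assumes b: "0 < b"
  shows "\<exists>B. \<forall>w. 0 < w \<and> w < b \<longrightarrow> \<bar>(gq q w - (\<Sum>i\<le>N. gq_coeff q i * w ^ i)) / w ^ Suc N\<bar> \<le> B"
proof -
  have "continuous_on {0..b} (gq_derivs q (Suc N))"
    by (intro continuous_at_imp_continuous_on ballI DERIV_isCont[OF gq_derivs_deriv]) auto
  then have "bounded (gq_derivs q (Suc N) ` {0..b})"
    by (intro compact_imp_bounded compact_continuous_image) auto
  then obtain B where B: "\<And>t. t \<in> {0..b} \<Longrightarrow> \<bar>gq_derivs q (Suc N) t\<bar> \<le> B"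
    unfolding bounded_real by (metis image_eqI)
  show ?thesis
  proof (intro exI[of _ B] allI impI)
    fix w assume w: "0 < w \<and> w < b"
    obtain t where t: "0 < t" "t < w"
      "gq q w = (\<Sum>m<Suc N. gq_derivs q m 0 / fact m * w ^ m) + gq_derivs q (Suc N) t / fact (Suc N) * w ^ Suc N"
      using Maclaurin[of w "Suc N" "gq_derivs q" "gq q"] w gq_derivs_0 gq_derivs_deriv by auto
    have "(\<Sum>m<Suc N. gq_derivs q m 0 / fact m * w ^ m) = (\<Sum>i\<le>N. gq_coeff q i * w ^ i)"
      unfolding gq_coeff_def lessThan_Suc_atMost by simp
    then have "(gq q w - (\<Sum>i\<le>N. gq_coeff q i * w ^ i)) / w ^ Suc N = gq_derivs q (Suc N) t / fact (Suc N)"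
      using t w by simp
    moreover have "\<bar>gq_derivs q (Suc N) t / fact (Suc N)\<bar> \<le> \<bar>gq_derivs q (Suc N) t\<bar>"
      using fact_ge_1[of "Suc N", where 'a=real] by (simp add: divide_le_eq mult_le_cancel_left1)
    moreover have "\<bar>gq_derivs q (Suc N) t\<bar> \<le> B" using B t w by auto
    ultimately show "\<bar>(gq q w - (\<Sum>i\<le>N. gq_coeff q i * w ^ i)) / w ^ Suc N\<bar> \<le> B" by simp
  qed
qed

lemma powr_tail_integral:
  fixes b s :: real
  assumes b: "0 < b" and s: "0 < s"
  shows "integrable lborel (\<lambda>w. indicator {b<..} w * w powr (-1 - s))"
    and "(\<integral>w. indicator {b<..} w * w powr (-1 - s) \<partial>lborel) = b powr (- s) / s"
proof -
  let ?F = "\<lambda>w. - (w powr (- s)) / s"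
  have d: "(?F has_real_derivative w powr (-1 - s)) (at w)" if "ereal b < ereal w" for w
  proof -
    have w: "0 < w" using that b by simp
    have "(?F has_real_derivative - ((- s) * w powr (- s - 1)) / s) (at w)"
      using w by (auto intro!: derivative_eq_intros)
    moreover have "- ((- s) * w powr (- s - 1)) / s = w powr (-1 - s)"
    proof -
      have e: "- s - 1 = -1 - s" by simp
      show ?thesis using s unfolding e by simp
    qed
    ultimately show ?thesis by simp
  qed
  have c: "isCont (\<lambda>w. w powr (-1 - s)) w" if "ereal b < ereal w" for w
    using that b by (auto intro!: continuous_intros)
  have A: "((?F \<circ> real_of_ereal) \<longlongrightarrow> ?F b) (at_right (ereal b))"
    unfolding ereal_tendsto_simps using b s by (intro tendsto_intros) auto
  have B: "((?F \<circ> real_of_ereal) \<longlongrightarrow> 0) (at_left \<infinity>)"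
  proof -
    have "((\<lambda>w. w powr (- s)) \<longlongrightarrow> 0) at_top"
      using s by (intro tendsto_neg_powr filterlim_ident) auto
    then have "(?F \<longlongrightarrow> - 0 / s) at_top" using s by (intro tendsto_intros) auto
    then show ?thesis unfolding ereal_tendsto_simps by simp
  qed
  have r: "set_integrable lborel (einterval (ereal b) \<infinity>) (\<lambda>w. w powr (-1 - s))"
    "(LBINT w=ereal b..\<infinity>. w powr (-1 - s)) = 0 - ?F b"
    using interval_integral_FTC_nonneg[of "ereal b" \<infinity> ?F "\<lambda>w. w powr (-1 - s)" "?F b" 0] d c A B
    by auto
  show "integrable lborel (\<lambda>w. indicator {b<..} w * w powr (-1 - s))"
    using r(1) by (simp add: set_integrable_def)
  show "(\<integral>w. indicator {b<..} w * w powr (-1 - s) \<partial>lborel) = b powr (- s) / s"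
    using r(2) by (simp add: interval_lebesgue_integral_def set_lebesgue_integral_def)
qed


text \<open>The antiderivative \<open>((1+w)\<^sup>s - 1) w\<^sup>-\<^sup>s / s\<close> of \<open>w\<^sup>-\<^sup>1\<^sup>-\<^sup>s (1 - (1+w)\<^sup>s\<^sup>-\<^sup>1)\<close> vanishes at
  \<open>0\<^sup>+\<close>, being squeezed between \<open>0\<close> and \<open>w\<^sup>1\<^sup>-\<^sup>s/s\<close>.\<close>

lemma powr_head_antideriv_deriv:
  fixes s w :: real
  assumes w: "0 < w" and s: "0 < s"
  shows "((\<lambda>w. ((1 + w) powr s - 1) * w powr (- s) / s) has_real_derivative
           w powr (-1 - s) * (1 - (1 + w) powr (s - 1))) (at w)"
proof -
  have "((\<lambda>w. ((1 + w) powr s - 1) * w powr (- s) / s) has_real_derivative ((s * (1 + w) powr (s - 1)) * w powr (- s)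
           + ((1 + w) powr s - 1) * ((- s) * w powr (- s - 1))) / s) (at w)"
    using w s by (auto intro!: derivative_eq_intros)
  moreover have "((s * (1 + w) powr (s - 1)) * w powr (- s)
           + ((1 + w) powr s - 1) * ((- s) * w powr (- s - 1))) / s = w powr (-1 - s) * (1 - (1 + w) powr (s - 1))"
  proof -
    have e1: "(1 + w) powr s = (1 + w) powr (s - 1) * (1 + w)"
      using powr_mult_base[of "1 + w" "s - 1"] w by (simp add: mult.commute)
    have e2: "w powr (- s) = w powr (- s - 1) * w"
      using powr_mult_base[of w "- s - 1"] w by (simp add: mult.commute)
    have e3: "- s - 1 = -1 - s" by simp
    show ?thesis using s unfolding e1 e2 e3 by (simp add: field_simps)
  qed
  ultimately show ?thesis by simp
qed

lemma powr_head_antideriv_tendsto: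
  fixes s :: real
  assumes s: "0 < s" "s < 1"
  shows "((\<lambda>w. ((1 + w) powr s - 1) * w powr (- s) / s) \<longlongrightarrow> 0) (at_right 0)"
proof (rule tendsto_sandwich[where f="\<lambda>_. 0" and h="\<lambda>w. w powr (1 - s) / s"])
  have ev: "eventually (\<lambda>w::real. 0 < w) (at_right 0)" by (simp add: eventually_at_right_less)
  then show "eventually (\<lambda>w. 0 \<le> ((1 + w) powr s - 1) * w powr (- s) / s) (at_right 0)"
    by eventually_elim (use s in \<open>auto intro!: divide_nonneg_pos mult_nonneg_nonneg ge_one_powr_ge_zero\<close>)
  show "eventually (\<lambda>w. ((1 + w) powr s - 1) * w powr (- s) / s \<le> w powr (1 - s) / s) (at_right 0)"
    using ev
  proof eventually_elim
    case (elim w)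
    have "(1 + w) powr s \<le> (1 + w) powr 1" using elim s by (intro powr_mono) auto
    then have "((1 + w) powr s - 1) * w powr (- s) \<le> w * w powr (- s)"
      using elim by (intro mult_right_mono) auto
    also have "w * w powr (- s) = w powr (1 - s)" using elim by (simp add: powr_mult_base)
    finally show ?case using s by (intro divide_right_mono) auto
  qed
  show "((\<lambda>_. 0::real) \<longlongrightarrow> 0) (at_right 0)" by simp
  have "((\<lambda>w. w powr (1 - s)) \<longlongrightarrow> 0) (at_right 0)"
    by (rule tendsto_zero_powrI[where b="1 - s"])
      (use s in \<open>auto intro!: tendsto_ident_at eventually_at_rightI[of 0 1]\<close>)
  then show "((\<lambda>w. w powr (1 - s) / s) \<longlongrightarrow> 0) (at_right 0)" by (auto intro: tendsto_divide_zero)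
qed

lemma powr_head_integral:
  fixes b s :: real
  assumes b: "0 < b" and s: "0 < s" "s < 1"
  shows "integrable lborel (\<lambda>w. indicator {0<..<b} w * (w powr (-1 - s) * (1 - (1 + w) powr (s - 1))))"
    and "(\<integral>w. indicator {0<..<b} w * (w powr (-1 - s) * (1 - (1 + w) powr (s - 1))) \<partial>lborel)
           = ((1 + b) powr s - 1) * b powr (- s) / s"
proof -
  let ?f = "\<lambda>w. w powr (-1 - s) * (1 - (1 + w) powr (s - 1))"
  let ?F = "\<lambda>w. ((1 + w) powr s - 1) * w powr (- s) / s"
  have nn: "0 \<le> ?f w" if "0 < w" for w
  proof -
    have "(1 + w) powr (s - 1) \<le> (1 + w) powr 0" using that s by (intro powr_mono) auto
    then show ?thesis using that by simp
  qed
  have A: "((?F \<circ> real_of_ereal) \<longlongrightarrow> 0) (at_right (ereal 0))"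
    unfolding ereal_tendsto_simps by (rule powr_head_antideriv_tendsto[OF s])
  have B: "((?F \<circ> real_of_ereal) \<longlongrightarrow> ?F b) (at_left (ereal b))"
    unfolding ereal_tendsto_simps using b s by (intro tendsto_intros) auto
  have c: "isCont ?f w" if "0 < w" for w
    using that by (auto intro!: continuous_intros)
  have r: "set_integrable lborel (einterval (ereal 0) (ereal b)) ?f"
    "(LBINT w=ereal 0..ereal b. ?f w) = ?F b - 0"
    using interval_integral_FTC_nonneg[of "ereal 0" "ereal b" ?F ?f 0 "?F b"]
      powr_head_antideriv_deriv[OF _ s(1)] c A B nn b by auto
  show "integrable lborel (\<lambda>w. indicator {0<..<b} w * ?f w)"
    using r(1) by (simp add: set_integrable_def)
  show "(\<integral>w. indicator {0<..<b} w * ?f w \<partial>lborel) = ((1 + b) powr s - 1) * b powr (- s) / s"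
    using r(2) b by (simp add: interval_lebesgue_integral_def set_lebesgue_integral_def)
qed

text \<open>It is not integrable at \<open>0\<close>, but
  \<open>w\<^sup>-\<^sup>1\<^sup>-\<^sup>s (e\<^sup>-\<^sup>2\<^sup>y\<^sup>w - 1)\<close> is, and its integral is homogeneous of degree \<open>s\<close> in \<open>y\<close>:
  \<open>\<integral>\<^sub>0\<^sup>\<infinity> w\<^sup>-\<^sup>1\<^sup>-\<^sup>s (e\<^sup>-\<^sup>2\<^sup>x\<^sup>w - 1) dw = -(2\<^sup>s \<Gamma>(1-s)/s) x\<^sup>s\<close>.  This produces the leading term
  \<open>c\<^sub>0 \<lambda>\<^sup>s\<close> of the expansion.\<close>

definition jump_kernel :: "real \<Rightarrow> real \<Rightarrow> real" where
  "jump_kernel s w = indicator {0<..} w * w powr (-1 - s)"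

lemma jump_kernel_moments:
  "w * jump_kernel s w = indicator {0<..} w * w powr (- s)"
  "w\<^sup>2 * jump_kernel s w = indicator {0<..} w * w powr (1 - s)"
proof -
  show *: "w * jump_kernel s w = indicator {0<..} w * w powr (- s)" for w
    by (cases "0 < w") (simp_all add: jump_kernel_def powr_mult_base)
  have "w\<^sup>2 * jump_kernel s w = w * (indicator {0<..} w * w powr (- s))"
    by (simp add: power2_eq_square * mult.assoc)
  then show "w\<^sup>2 * jump_kernel s w = indicator {0<..} w * w powr (1 - s)"
    by (cases "0 < w") (simp_all add: powr_mult_base)
qed

lemma exp_minus_one_bounds:
  fixes a :: real
  assumes "0 \<le> a"
  shows "\<bar>exp (- a) - 1\<bar> \<le> 1" and "\<bar>exp (- a) - 1\<bar> \<le> a"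
proof -
  have "1 - a \<le> exp (- a)" using exp_ge_add_one_self[of "- a"] by simp
  moreover have "exp (- a) \<le> 1" using assms by simp
  ultimately show "\<bar>exp (- a) - 1\<bar> \<le> 1" "\<bar>exp (- a) - 1\<bar> \<le> a" by auto
qed

text \<open>Pointwise domination: near \<open>0\<close> use \<open>|e\<^sup>-\<^sup>2\<^sup>y\<^sup>w - 1| \<le> 2yw\<close>, near \<open>\<infinity>\<close> use \<open>|e\<^sup>-\<^sup>2\<^sup>y\<^sup>w - 1| \<le> 1\<close>;
  both dominating functions are integrable.\<close>

lemma jump_kernel_exp_bound:
  assumes y: "0 < y"
  shows "\<bar>jump_kernel s w * (exp (- (2 * y * w)) - 1)\<bar>
    \<le> 2 * y * exp 1 * (indicator {0<..} w * w powr (- s) * exp (- (1 * w)))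
      + indicator {1<..} w * w powr (-1 - s)"
proof (cases "0 < w")
  case False
  then show ?thesis using y by (simp add: jump_kernel_def)
next
  case w: True
  have e: "\<bar>exp (- (2 * y * w)) - 1\<bar> \<le> 1" "\<bar>exp (- (2 * y * w)) - 1\<bar> \<le> 2 * y * w"
    using exp_minus_one_bounds[of "2 * y * w"] w y by auto
  have lhs: "\<bar>jump_kernel s w * (exp (- (2 * y * w)) - 1)\<bar> = w powr (-1 - s) * \<bar>exp (- (2 * y * w)) - 1\<bar>"
    using w by (simp add: jump_kernel_def abs_mult)
  show ?thesis
  proof (cases "w \<le> 1")
    case True
    have "w powr (-1 - s) * \<bar>exp (- (2 * y * w)) - 1\<bar> \<le> w powr (-1 - s) * (2 * y * w)"
      by (intro mult_left_mono e) auto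
    also have "\<dots> = 2 * y * w powr (- s)"
      using w by (simp add: powr_mult_base mult_ac)
    also have "\<dots> \<le> 2 * y * exp 1 * (w powr (- s) * exp (- (1 * w)))"
    proof -
      have "1 \<le> exp 1 * exp (- w)" using True by (simp add: exp_add[symmetric])
      then have "w powr (- s) \<le> w powr (- s) * (exp 1 * exp (- w))"
        by (metis mult.right_neutral mult_left_mono powr_ge_zero)
      then show ?thesis using y by (simp add: mult_ac)
    qed
    finally show ?thesis unfolding lhs using w True by (simp add: indicator_def)
  next
    case False
    have "w powr (-1 - s) * \<bar>exp (- (2 * y * w)) - 1\<bar> \<le> w powr (-1 - s)"
      using mult_left_mono[OF e(1), of "w powr (-1 - s)"] by simp
    moreover have "0 \<le> 2 * y * exp 1 * (indicator {0<..} w * w powr (- s) * exp (- (1 * w)))"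
      using y by simp
    moreover have "indicator {1<..} w * w powr (-1 - s) = w powr (-1 - s)"
      using False by simp
    ultimately show ?thesis unfolding lhs by linarith
  qed
qed

lemma jump_kernel_integrable:
  assumes s: "0 < s" "s < 1" and y: "0 < y"
  shows "integrable lborel (\<lambda>w. jump_kernel s w * (exp (- (2 * y * w)) - 1))"
proof (rule Bochner_Integration.integrable_bound)
  show "integrable lborel (\<lambda>w. 2 * y * exp 1 * (indicator {0<..} w * w powr (- s) * exp (- (1 * w)))
      + indicator {1<..} w * w powr (-1 - s))"
    using gamma_integrable[of "- s" 1] powr_tail_integral(1)[of 1 s] s by auto
  show "(\<lambda>w. jump_kernel s w * (exp (- (2 * y * w)) - 1)) \<in> borel_measurable lborel"
    unfolding jump_kernel_def by measurable
  show "AE w in lborel. norm (jump_kernel s w * (exp (- (2 * y * w)) - 1))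
      \<le> norm (2 * y * exp 1 * (indicator {0<..} w * w powr (- s) * exp (- (1 * w)))
         + indicator {1<..} w * w powr (-1 - s))"
    using jump_kernel_exp_bound[OF y, of s] by (intro AE_I2) (smt (verit) real_norm_def)
qed

lemma jump_kernel_laplace_deriv:
  assumes s: "0 < s" "s < 1" and y: "0 < y"
  shows "((\<lambda>x. \<integral>w. jump_kernel s w * (exp (- (2 * x * w)) - 1) \<partial>lborel) has_real_derivative
           - 2 * (Gamma (1 - s) * (2 * y) powr (s - 1))) (at y)"
proof -
  have supp: "jump_kernel s w \<noteq> 0 \<Longrightarrow> 0 < w" for w
    by (simp add: jump_kernel_def indicator_def split: if_splits)
  have I1: "integrable lborel (\<lambda>w. w * jump_kernel s w * exp (- (y * w)))" if "0 < y" for y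
    using gamma_integrable[of "- s" y] s that by (simp add: jump_kernel_moments)
  have I2: "integrable lborel (\<lambda>w. w\<^sup>2 * jump_kernel s w * exp (- (y * w)))" if "0 < y" for y
    using gamma_integrable[of "1 - s" y] s that by (simp add: jump_kernel_moments)
  have "(\<integral>w. - 2 * w * jump_kernel s w * exp (- (2 * y * w)) \<partial>lborel)
      = (\<integral>w. - 2 * (indicator {0<..} w * w powr (- s) * exp (- ((2 * y) * w))) \<partial>lborel)"
    by (intro Bochner_Integration.integral_cong refl) (simp add: jump_kernel_moments[symmetric] mult_ac)
  also have "\<dots> = - 2 * (Gamma (1 - s) * (2 * y) powr (s - 1))"
    using gamma_integral[of "- s" "2 * y"] s y by simp
  finally show ?thesis
    using laplace_has_derivative[OF supp I1 I2 jump_kernel_integrable[OF s] y] by simp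
qed

text \<open>Scaling \<open>w \<mapsto> w/y\<close> shows \<open>\<Phi>(y) = y\<^sup>s \<Phi>(1)\<close>.\<close>

lemma jump_kernel_laplace_homogeneous:
  assumes y: "0 < y"
  shows "(\<integral>w. jump_kernel s w * (exp (- (2 * y * w)) - 1) \<partial>lborel)
       = y powr s * (\<integral>w. jump_kernel s w * (exp (- (2 * w)) - 1) \<partial>lborel)"
proof -
  have kernel_scale: "jump_kernel s (v / y) = y powr (1 + s) * jump_kernel s v" for v
  proof (cases "0 < v")
    case True
    have "(v / y) powr (-1 - s) = v powr (-1 - s) / y powr (-1 - s)" by (rule powr_divide)
    also have "\<dots> = y powr (1 + s) * v powr (-1 - s)"
      using y powr_add[of y "1 + s" "-1 - s", symmetric] by (simp add: field_simps)
    finally show ?thesis using True y by (simp add: jump_kernel_def)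
  next
    case False
    then show ?thesis using y by (simp add: jump_kernel_def divide_less_0_iff not_less zero_less_divide_iff)
  qed
  have "(\<integral>w. jump_kernel s w * (exp (- (2 * y * w)) - 1) \<partial>lborel)
      = \<bar>1 / y\<bar> *\<^sub>R (\<integral>v. jump_kernel s (0 + (1 / y) * v) * (exp (- (2 * y * (0 + (1 / y) * v))) - 1) \<partial>lborel)"
    using y by (intro lborel_integral_real_affine) simp
  also have "(\<integral>v. jump_kernel s (0 + (1 / y) * v) * (exp (- (2 * y * (0 + (1 / y) * v))) - 1) \<partial>lborel)
      = (\<integral>v. y powr (1 + s) * (jump_kernel s v * (exp (- (2 * v)) - 1)) \<partial>lborel)"
    using y by (intro Bochner_Integration.integral_cong refl) (simp add: kernel_scale)
  finally show ?thesis using y by (simp add: powr_add)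
qed

text \<open>Hence \<open>\<Phi>(y) + (2\<^sup>s \<Gamma>(1-s)/s) y\<^sup>s\<close> has zero derivative, so it is a constant \<open>\<kappa>\<close>; homogeneity
  at \<open>y = 1, 2\<close> gives \<open>\<kappa> = 2\<^sup>s \<kappa>\<close>, i.e. \<open>\<kappa> = 0\<close>.\<close>

lemma jump_kernel_laplace:
  assumes s: "0 < s" "s < 1" and x: "0 < x"
  shows "(\<integral>w. jump_kernel s w * (exp (- (2 * x * w)) - 1) \<partial>lborel) = - (2 powr s * Gamma (1 - s) / s) * x powr s"
proof -
  define \<Phi> where "\<Phi> x = (\<integral>w. jump_kernel s w * (exp (- (2 * x * w)) - 1) \<partial>lborel)" for x
  define Jc where "Jc = 2 powr s * Gamma (1 - s) / s"
  define \<Psi> where "\<Psi> x = \<Phi> x + Jc * x powr s" for x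
  have "(\<Psi> has_real_derivative 0) (at y within {0<..})" if y: "y \<in> {0<..}" for y
  proof -
    have y0: "0 < y" using y by simp
    have "(\<Psi> has_real_derivative - 2 * (Gamma (1 - s) * (2 * y) powr (s - 1)) + Jc * (s * y powr (s - 1))) (at y)"
      unfolding \<Psi>_def[abs_def] \<Phi>_def using y0
      by (auto intro!: derivative_eq_intros jump_kernel_laplace_deriv[OF s])
    moreover have "- 2 * (Gamma (1 - s) * (2 * y) powr (s - 1)) + Jc * (s * y powr (s - 1)) = 0"
    proof -
      have "(2 * y) powr (s - 1) = 2 powr (s - 1) * y powr (s - 1)" using y0 by (simp add: powr_mult)
      moreover have "2 * 2 powr (s - 1) = (2::real) powr s" by (simp add: powr_diff)
      ultimately show ?thesis using s unfolding Jc_def by (simp add: field_simps)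
    qed
    ultimately show ?thesis by (simp add: has_field_derivative_at_within)
  qed
  then obtain \<kappa> where \<kappa>: "\<And>y. y \<in> {0<..} \<Longrightarrow> \<Psi> y = \<kappa>"
    using has_field_derivative_zero_constant[of "{0<..}" \<Psi>] by auto
  have "\<Phi> 1 + Jc = \<kappa>" using \<kappa>[of 1] unfolding \<Psi>_def by simp
  moreover have "2 powr s * (\<Phi> 1 + Jc) = \<kappa>"
    using \<kappa>[of 2] jump_kernel_laplace_homogeneous[of 2 s] unfolding \<Psi>_def \<Phi>_def
    by (simp add: algebra_simps)
  moreover have "(1::real) < 2 powr s" using s by simp
  ultimately have "\<kappa> = 0" by (smt (verit, best) mult_cancel_right1)
  then have "\<Psi> x = 0" using \<kappa>[of x] x by simp
  then show ?thesis unfolding \<Psi>_def \<Phi>_def Jc_def by linarith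
qed


lemma one_plus_tan_sq:
  fixes c sn :: real
  assumes c: "0 < c" and pyth: "sn\<^sup>2 + c\<^sup>2 = 1"
  shows "1 + (sn / c)\<^sup>2 = c powr (- 2)"
proof -
  have "1 + (sn / c)\<^sup>2 = (c\<^sup>2 + sn\<^sup>2) / c\<^sup>2"
    using c by (simp add: power_divide add_divide_distrib)
  also have "\<dots> = 1 / c powr 2" using pyth c by (simp add: add.commute powr_numeral)
  finally show ?thesis by (simp add: powr_minus_divide)
qed

lemma tan_sq_powr:
  fixes c sn s :: real
  assumes c: "0 < c" and sn: "0 < sn"
  shows "((sn / c)\<^sup>2) powr (-1 - s) = c powr (2 + 2 * s) / sn powr (2 + 2 * s)"
proof -
  have "((sn / c)\<^sup>2) powr (-1 - s) = ((sn / c) powr 2) powr (-1 - s)"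
    using c sn by (simp add: powr_numeral)
  also have "\<dots> = (sn / c) powr (- (2 + 2 * s))"
    unfolding powr_powr by (simp add: algebra_simps)
  also have "\<dots> = c powr (2 + 2 * s) / sn powr (2 + 2 * s)"
    unfolding powr_minus_divide powr_divide by simp
  finally show ?thesis .
qed

lemma one_plus_tan_sq_powr:
  fixes c sn s :: real and d :: nat
  assumes c: "0 < c" and pyth: "sn\<^sup>2 + c\<^sup>2 = 1"
  shows "(1 + (sn / c)\<^sup>2) powr (s - 1) = c powr (2 - 2 * s)"
    and "(1 + (sn / c)\<^sup>2) powr (s - 1 + real d) = c powr (2 - 2 * s) / c ^ (2 * d)"
proof -
  have e: "(1 + (sn / c)\<^sup>2) powr a = c powr (- 2 * a)" for a
    unfolding one_plus_tan_sq[OF c pyth] using c by (simp add: powr_powr)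
  have "- 2 * (s - 1) = 2 - 2 * s" by simp
  then show "(1 + (sn / c)\<^sup>2) powr (s - 1) = c powr (2 - 2 * s)"
    unfolding e by (simp only:)
  have "- 2 * (s - 1 + real d) = (2 - 2 * s) - real (2 * d)" by simp
  then have "c powr (- 2 * (s - 1 + real d)) = c powr (2 - 2 * s) / c powr real (2 * d)"
    by (simp only: powr_diff)
  then show "(1 + (sn / c)\<^sup>2) powr (s - 1 + real d) = c powr (2 - 2 * s) / c ^ (2 * d)"
    unfolding e powr_realpow[OF c] .
qed

lemma div_powr_shift:
  fixes sn s :: real
  assumes sn: "0 < sn"
  shows "sn / sn powr (2 + 2 * s) = 1 / sn powr (1 + 2 * s)"
proof -
  have "sn powr (2 + 2 * s) = sn * sn powr (1 + 2 * s)"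
    using powr_mult_base[of sn "1 + 2 * s"] sn by simp
  then show ?thesis using sn by simp
qed

lemma powr_cancel_to_base:
  fixes c s :: real
  assumes c: "0 < c"
  shows "c powr (2 + 2 * s) * c powr (2 - 2 * s) / (c * c\<^sup>2) = c"
proof -
  have "c powr (2 + 2 * s) * c powr (2 - 2 * s) = c powr real 4" by (simp add: powr_add[symmetric])
  also have "\<dots> = c ^ 4" using c by (rule powr_realpow)
  finally show ?thesis using c by (simp add: power2_eq_square power4_eq_xxxx field_simps)
qed

text \<open>The change of variables \<open>w = tan\<^sup>2(\<theta>/2)\<close>, \<open>dw = tan(\<theta>/2)/cos\<^sup>2(\<theta>/2) d\<theta>\<close>, transforms the
  integrand of \<open>l\<^sub>1\<^sub>;\<^sub>d\<close> into \<open>w\<^sup>-\<^sup>1\<^sup>-\<^sup>s ((1+w)\<^sup>s\<^sup>-\<^sup>1 - (1+w)\<^sup>s\<^sup>-\<^sup>1\<^sup>+\<^sup>d e\<^sup>2\<^sup>w e\<^sup>-\<^sup>2\<^sup>x\<^sup>w)\<close>, where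
  \<open>x = \<lambda>\<close>; pointwise this is the following algebraic identity.\<close>

lemma half_angle_identity:
  fixes c sn x s :: real and d :: nat
  assumes c: "0 < c" and sn: "0 < sn" and pyth: "sn\<^sup>2 + c\<^sup>2 = 1"
  shows "((sn / c)\<^sup>2) powr (-1 - s) * ((1 + (sn / c)\<^sup>2) powr (s - 1)
      - (1 + (sn / c)\<^sup>2) powr (s - 1 + real d) * exp (2 * (sn / c)\<^sup>2) * exp (- (2 * x * (sn / c)\<^sup>2)))
      * ((sn / c) / c\<^sup>2)
    = c / sn powr (1 + 2 * s) * (1 - exp (- 2 * (sn / c)\<^sup>2 * (x - 1)) / c ^ (2 * d))"
proof -
  define E where "E = exp (- 2 * (sn / c)\<^sup>2 * (x - 1))"
  have "exp (2 * (sn / c)\<^sup>2) * exp (- (2 * x * (sn / c)\<^sup>2)) = E"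
    unfolding E_def exp_add[symmetric] by (simp add: algebra_simps)
  then have "((sn / c)\<^sup>2) powr (-1 - s) * ((1 + (sn / c)\<^sup>2) powr (s - 1)
      - (1 + (sn / c)\<^sup>2) powr (s - 1 + real d) * exp (2 * (sn / c)\<^sup>2) * exp (- (2 * x * (sn / c)\<^sup>2)))
      * ((sn / c) / c\<^sup>2)
    = (sn / sn powr (2 + 2 * s)) * (c powr (2 + 2 * s) * c powr (2 - 2 * s) / (c * c\<^sup>2)) * (1 - E / c ^ (2 * d))"
    unfolding tan_sq_powr[OF c sn] one_plus_tan_sq_powr[OF c pyth] mult.assoc[of _ "exp _" "exp _"]
    by (simp add: field_simps)
  also have "\<dots> = c / sn powr (1 + 2 * s) * (1 - E / c ^ (2 * d))"
    unfolding div_powr_shift[OF sn] powr_cancel_to_base[OF c] by simp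
  finally show ?thesis unfolding E_def .
qed

text \<open>The integration range \<open>|\<theta>| \<le> \<pi>/4\<close> corresponds to \<open>0 \<le> w \<le> b\<close> with \<open>b = tan\<^sup>2(\<pi>/8)\<close>.\<close>

definition tan8sq :: real where "tan8sq = (tan (pi / 8))\<^sup>2"

lemma tan_half_pos: "0 < \<theta> \<Longrightarrow> \<theta> \<le> pi / 4 \<Longrightarrow> 0 < tan (\<theta> / 2)"
  by (intro tan_gt_zero) auto

lemma cos_half_pos: "0 \<le> \<theta> \<Longrightarrow> \<theta> \<le> pi / 4 \<Longrightarrow> 0 < cos (\<theta> / 2)"
  by (rule cos_gt_zero_pi) (use pi_gt_zero in linarith)+

lemma sin_half_pos: "0 < \<theta> \<Longrightarrow> \<theta> \<le> pi / 4 \<Longrightarrow> 0 < sin (\<theta> / 2)"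
  by (intro sin_gt_zero) auto

lemma tan8sq_pos: "0 < tan8sq"
  unfolding tan8sq_def using tan_half_pos[of "pi/4"] by simp

text \<open>The integrand of \<open>l\<^sub>1\<^sub>;\<^sub>d\<close> as a function of \<open>x = \<lambda>(v,\<xi>)\<close> (note
  \<open>|\<xi>|\<^sup>2 + |v|\<^sup>2/4 = x - 1\<close>), and the transformed integrand in the variable \<open>w\<close>.\<close>

definition l1_integrand :: "real \<Rightarrow> nat \<Rightarrow> real \<Rightarrow> real \<Rightarrow> real" where
  "l1_integrand s d x \<theta> = beta_s s \<theta> * (1 - exp (- 2 * (tan (\<theta> / 2))\<^sup>2 * (x - 1)) / (cos (\<theta> / 2)) ^ (2 * d))"

definition subst_integrand :: "real \<Rightarrow> nat \<Rightarrow> real \<Rightarrow> real \<Rightarrow> real" where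
  "subst_integrand s d x w = w powr (-1 - s) * ((1 + w) powr (s - 1)
      - (1 + w) powr (s - 1 + real d) * exp (2 * w) * exp (- (2 * x * w)))"

lemma l1_integrand_0: "l1_integrand s d x 0 = 0"
  by (simp add: l1_integrand_def beta_s_def)

lemma l1_integrand_even: "l1_integrand s d x (- \<theta>) = l1_integrand s d x \<theta>"
  by (simp add: l1_integrand_def beta_s_def)

lemma subst_integrand_0: "subst_integrand s d x 0 = 0"
  by (simp add: subst_integrand_def)

lemma subst_integrand_eq:
  assumes "0 \<le> \<theta>" "\<theta> \<le> pi / 4"
  shows "subst_integrand s d x ((tan (\<theta> / 2))\<^sup>2) * (tan (\<theta> / 2) / (cos (\<theta> / 2))\<^sup>2) = l1_integrand s d x \<theta>"
proof (cases "\<theta> = 0")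
  case True
  then show ?thesis by (simp add: subst_integrand_0 l1_integrand_0)
next
  case False
  then have th: "0 < \<theta>" using assms by simp
  have c: "0 < cos (\<theta> / 2)" using cos_half_pos assms by blast
  have sn: "0 < sin (\<theta> / 2)" using sin_half_pos th assms by blast
  have py: "(sin (\<theta> / 2))\<^sup>2 + (cos (\<theta> / 2))\<^sup>2 = 1" by simp
  have t: "tan (\<theta> / 2) = sin (\<theta> / 2) / cos (\<theta> / 2)" by (simp add: tan_def)
  show ?thesis
    using half_angle_identity[OF c sn py, of s d x] c sn
    unfolding subst_integrand_def l1_integrand_def beta_s_def t by simp
qed

lemma even_set_integral:
  fixes f :: "real \<Rightarrow> real"
  assumes even: "\<And>\<theta>. f (- \<theta>) = f \<theta>"
    and int: "integrable lborel (\<lambda>\<theta>. indicator {0..a} \<theta> * f \<theta>)"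
    and fm: "f \<in> borel_measurable borel"
  shows "(LINT \<theta>:{-a..a}|lborel. f \<theta>) = 2 * (\<integral>\<theta>. indicator {0..a} \<theta> * f \<theta> \<partial>lborel)"
proof -
  have int': "integrable lborel (\<lambda>\<theta>. indicator {0..a} (0 + (-1) * \<theta>) * f (0 + (-1) * \<theta>))"
    using lborel_integrable_real_affine[OF int, of "-1" 0] by simp
  have refl: "(\<integral>\<theta>. indicator {0..a} (0 + (-1) * \<theta>) * f (0 + (-1) * \<theta>) \<partial>lborel)
       = (\<integral>\<theta>. indicator {0..a} \<theta> * f \<theta> \<partial>lborel)"
    using lborel_integral_real_affine[of "-1" "\<lambda>\<theta>. indicator {0..a} \<theta> * f \<theta>" 0] by simp
  have "AE \<theta> in lborel. indicator {-a..a} \<theta> * f \<theta>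
      = indicator {0..a} \<theta> * f \<theta> + indicator {0..a} (0 + (-1) * \<theta>) * f (0 + (-1) * \<theta>)"
    using AE_lborel_singleton[of 0] by eventually_elim (auto simp: indicator_def even)
  then have "(LINT \<theta>:{-a..a}|lborel. f \<theta>) = (\<integral>\<theta>. indicator {0..a} \<theta> * f \<theta>
      + indicator {0..a} (0 + (-1) * \<theta>) * f (0 + (-1) * \<theta>) \<partial>lborel)"
    unfolding set_lebesgue_integral_def by (intro integral_cong_AE) (use fm in auto)
  also have "\<dots> = 2 * (\<integral>\<theta>. indicator {0..a} \<theta> * f \<theta> \<partial>lborel)"
    using int int' refl by simp
  finally show ?thesis .
qed

lemma l1_half_integral_substitution:
  assumes int: "integrable lborel (\<lambda>w. indicator {0<..<tan8sq} w * subst_integrand s d x w)"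
  shows "integrable lborel (\<lambda>\<theta>. indicator {0..pi/4} \<theta> * l1_integrand s d x \<theta>)"
    and "(\<integral>\<theta>. indicator {0..pi/4} \<theta> * l1_integrand s d x \<theta> \<partial>lborel)
           = (\<integral>w. indicator {0<..<tan8sq} w * subst_integrand s d x w \<partial>lborel)"
proof -
  let ?g = "\<lambda>\<theta>::real. (tan (\<theta> / 2))\<^sup>2"
  let ?g' = "\<lambda>\<theta>::real. tan (\<theta> / 2) / (cos (\<theta> / 2))\<^sup>2"
  have hm: "subst_integrand s d x \<in> borel_measurable borel"
    unfolding subst_integrand_def[abs_def] by measurable
  have AEb: "AE w in lborel. indicator {0..tan8sq} w * subst_integrand s d x w
      = indicator {0<..<tan8sq} w * subst_integrand s d x w"
    using AE_lborel_singleton[of tan8sq] by eventually_elim (auto simp: indicator_def subst_integrand_0)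
  have "integrable lborel (\<lambda>w. indicator {0..tan8sq} w * subst_integrand s d x w)"
    using int by (subst integrable_cong_AE[OF _ _ AEb]) (use hm in auto)
  then have int2: "set_integrable lborel {?g 0..?g (pi/4)} (subst_integrand s d x)"
    by (simp add: set_integrable_def tan8sq_def)
  have derivg: "(?g has_real_derivative ?g' \<theta>) (at \<theta>)" if "\<theta> \<in> {0..pi/4}" for \<theta>
  proof -
    have c: "cos (\<theta> / 2) \<noteq> 0" using cos_half_pos[of \<theta>] that by auto
    have "(?g has_real_derivative 2 * tan (\<theta> / 2) * (inverse ((cos (\<theta> / 2))\<^sup>2) * (1 / 2))) (at \<theta>)"
      using c by (auto intro!: derivative_eq_intros)
    then show ?thesis by (simp add: field_simps)
  qed
  have contg': "continuous_on {0..pi/4} ?g'"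
  proof (intro continuous_intros ballI)
    fix \<theta> :: real assume "\<theta> \<in> {0..pi/4}"
    then have "0 < cos (\<theta> / 2)" using cos_half_pos by auto
    then show "cos (\<theta> / 2) \<noteq> 0" "(cos (\<theta> / 2))\<^sup>2 \<noteq> 0" by auto
  qed auto
  have g'nn: "0 \<le> ?g' \<theta>" if "\<theta> \<in> {0..pi/4}" for \<theta>
    using tan_half_pos[of \<theta>] that by (cases "\<theta> = 0") auto
  have pi4: "0 \<le> pi / 4" by simp
  note S = integral_substitution[OF int2 derivg contg' g'nn pi4]
  have eq: "indicator {0..pi/4} \<theta> * l1_integrand s d x \<theta>
      = indicator {0..pi/4} \<theta> *\<^sub>R (subst_integrand s d x (?g \<theta>) * ?g' \<theta>)" for \<theta>
    using subst_integrand_eq[of \<theta> s d x] by (auto simp: indicator_def)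
  show "integrable lborel (\<lambda>\<theta>. indicator {0..pi/4} \<theta> * l1_integrand s d x \<theta>)"
    using S(1) unfolding eq set_integrable_def .
  have "(\<integral>\<theta>. indicator {0..pi/4} \<theta> * l1_integrand s d x \<theta> \<partial>lborel)
      = (\<integral>w. indicator {0..tan8sq} w * subst_integrand s d x w \<partial>lborel)"
    using S(2) unfolding eq by (simp add: set_lebesgue_integral_def tan8sq_def mult.commute)
  also have "\<dots> = (\<integral>w. indicator {0<..<tan8sq} w * subst_integrand s d x w \<partial>lborel)"
    by (rule integral_cong_AE[OF _ _ AEb]) (use hm in auto)
  finally show "(\<integral>\<theta>. indicator {0..pi/4} \<theta> * l1_integrand s d x \<theta> \<partial>lborel)
      = (\<integral>w. indicator {0<..<tan8sq} w * subst_integrand s d x w \<partial>lborel)" .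
qed

lemma l1_integral_substitution:
  assumes int: "integrable lborel (\<lambda>w. indicator {0<..<tan8sq} w * subst_integrand s d x w)"
  shows "(LINT \<theta>:{-pi/4..pi/4}|lborel. l1_integrand s d x \<theta>)
           = 2 * (\<integral>w. indicator {0<..<tan8sq} w * subst_integrand s d x w \<partial>lborel)"
proof -
  have "(LINT \<theta>:{-(pi/4)..pi/4}|lborel. l1_integrand s d x \<theta>)
      = 2 * (\<integral>\<theta>. indicator {0..pi/4} \<theta> * l1_integrand s d x \<theta> \<partial>lborel)"
    by (rule even_set_integral[OF l1_integrand_even l1_half_integral_substitution(1)[OF int]])
      (unfold l1_integrand_def[abs_def] beta_s_def[abs_def] tan_def, measurable)
  then show ?thesis using l1_half_integral_substitution(2)[OF int] by simp
qed

text \<open>Truncating at \<open>w = b\<close>: on \<open>(b,\<infinity>)\<close> the kernel \<open>w\<^sup>\<alpha>\<close> is dominated by \<open>b\<^sup>-\<^sup>m w\<^sup>\<alpha>\<^sup>+\<^sup>m\<close> for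
  every \<open>m\<close>, so its Laplace transform decays faster than any power of \<open>x\<close>.  The truncated
  Gamma and jump-kernel integrals over \<open>(0,b)\<close> are the full ones minus such tails.\<close>

definition tail_kernel :: "real \<Rightarrow> real \<Rightarrow> real \<Rightarrow> real" where
  "tail_kernel b \<alpha> w = indicator {b<..} w * w powr \<alpha>"

lemma tail_kernel_measurable: "tail_kernel b \<alpha> \<in> borel_measurable borel"
  unfolding tail_kernel_def[abs_def] by measurable

lemma kernel_dom_tail:
  assumes b: "0 < b"
  shows "kernel_dom (tail_kernel b \<alpha>) (b powr (- real m)) (\<alpha> + real m)"
  unfolding kernel_dom_def
proof
  fix w :: real
  show "\<bar>tail_kernel b \<alpha> w\<bar> \<le> b powr (- real m) * (indicator {0<..} w * w powr (\<alpha> + real m))"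
  proof (cases "b < w")
    case True
    then have w: "0 < w" using b by simp
    have "w powr (- real m) \<le> b powr (- real m)"
      using True b by (intro powr_mono2') auto
    have e: "w powr (- real m) * w powr real m = 1"
      using w by (simp add: powr_add[symmetric])
    have "w powr \<alpha> = w powr \<alpha> * (w powr (- real m) * w powr real m)" unfolding e by simp
    also have "\<dots> \<le> w powr \<alpha> * (b powr (- real m) * w powr real m)"
      using \<open>w powr (- real m) \<le> b powr (- real m)\<close> by (intro mult_left_mono mult_right_mono) auto
    also have "\<dots> = b powr (- real m) * w powr (\<alpha> + real m)"
      by (simp add: powr_add mult_ac)
    finally have "w powr \<alpha> \<le> b powr (- real m) * w powr (\<alpha> + real m)" .
    then show ?thesis using True w by (simp add: tail_kernel_def)
  next
    case False
    then show ?thesis by (simp add: tail_kernel_def indicator_def)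
  qed
qed

lemma order_family_tail:
  assumes b: "0 < b"
  shows "order_family M (laplace_derivs (tail_kernel b \<alpha>))"
proof -
  define m where "m = nat \<lceil>\<bar>\<alpha>\<bar> + \<bar>M\<bar> + 2\<rceil>"
  have m: "real m \<ge> \<bar>\<alpha>\<bar> + \<bar>M\<bar> + 2" unfolding m_def by linarith
  have g: "-1 < \<alpha> + real m" using m by linarith
  have "order_family (- (\<alpha> + real m + 1)) (laplace_derivs (tail_kernel b \<alpha>))"
    by (rule order_family_laplace[OF tail_kernel_measurable kernel_dom_tail[OF b] g])
  then show ?thesis by (rule order_family_mono) (use m in linarith)
qed

lemma indicator_split_AE:
  fixes b :: real
  assumes "0 < b"
  shows "AE w in lborel. indicator {0<..} w = (indicator {0<..<b} w + indicator {b<..} w :: real)"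
  using AE_lborel_singleton[of b] by eventually_elim (use assms in \<open>auto simp: indicator_def\<close>)

lemma integrable_restrict:
  fixes f :: "real \<Rightarrow> real"
  assumes "integrable lborel (\<lambda>w. indicator T w * f w)" "S \<subseteq> T" "S \<in> sets lborel"
  shows "integrable lborel (\<lambda>w. indicator S w * f w)"
proof -
  have "integrable lborel (\<lambda>w. indicator S w *\<^sub>R (indicator T w * f w))"
    by (rule integrable_mult_indicator) (use assms in auto)
  then show ?thesis
    by (rule Bochner_Integration.integrable_cong[THEN iffD1, rotated 2]) (use assms in \<open>auto simp: indicator_def\<close>)
qed

lemma truncated_gamma_integral:
  fixes \<gamma> y b :: real
  assumes g: "-1 < \<gamma>" and y: "0 < y" and b: "0 < b"
  shows "integrable lborel (\<lambda>w. indicator {0<..<b} w * w powr \<gamma> * exp (- (y * w)))"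
    and "(\<integral>w. indicator {0<..<b} w * w powr \<gamma> * exp (- (y * w)) \<partial>lborel)
      = Gamma (\<gamma> + 1) * y powr (- (\<gamma> + 1)) - (\<integral>w. indicator {b<..} w * w powr \<gamma> * exp (- (y * w)) \<partial>lborel)"
proof -
  have G: "integrable lborel (\<lambda>w. indicator {0<..} w * w powr \<gamma> * exp (- (y * w)))"
    by (rule gamma_integrable[OF g y])
  have G': "integrable lborel (\<lambda>w. indicator {0<..} w * (w powr \<gamma> * exp (- (y * w))))"
    using G by (simp only: mult.assoc)
  have I1: "integrable lborel (\<lambda>w. indicator {0<..<b} w * w powr \<gamma> * exp (- (y * w)))"
    using integrable_restrict[OF G', of "{0<..<b}"] by (simp add: mult.assoc subset_eq)
  have I2: "integrable lborel (\<lambda>w. indicator {b<..} w * w powr \<gamma> * exp (- (y * w)))"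
    using integrable_restrict[OF G', of "{b<..}"] b by (simp add: mult.assoc subset_eq)
  show "integrable lborel (\<lambda>w. indicator {0<..<b} w * w powr \<gamma> * exp (- (y * w)))" by (fact I1)
  have "Gamma (\<gamma> + 1) * y powr (- (\<gamma> + 1)) = (\<integral>w. indicator {0<..} w * w powr \<gamma> * exp (- (y * w)) \<partial>lborel)"
    using gamma_integral[OF g y] by simp
  also have "\<dots> = (\<integral>w. indicator {0<..<b} w * w powr \<gamma> * exp (- (y * w)) + indicator {b<..} w * w powr \<gamma> * exp (- (y * w)) \<partial>lborel)"
    by (rule integral_cong_AE) (use indicator_split_AE[OF b] in \<open>auto elim!: eventually_mono simp: algebra_simps\<close>)
  also have "\<dots> = (\<integral>w. indicator {0<..<b} w * w powr \<gamma> * exp (- (y * w)) \<partial>lborel) + (\<integral>w. indicator {b<..} w * w powr \<gamma> * exp (- (y * w)) \<partial>lborel)"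
    by (rule Bochner_Integration.integral_add[OF I1 I2])
  finally show "(\<integral>w. indicator {0<..<b} w * w powr \<gamma> * exp (- (y * w)) \<partial>lborel)
      = Gamma (\<gamma> + 1) * y powr (- (\<gamma> + 1)) - (\<integral>w. indicator {b<..} w * w powr \<gamma> * exp (- (y * w)) \<partial>lborel)"
    by simp
qed

lemma tail_kernel_integrable:
  assumes b: "0 < b" and y: "0 < y"
  shows "integrable lborel (\<lambda>w. tail_kernel b \<alpha> w * exp (- (y * w)))"
proof -
  define m where "m = nat \<lceil>\<bar>\<alpha>\<bar>\<rceil> + 1"
  have g: "-1 < \<alpha> + real m" unfolding m_def by linarith
  show ?thesis using kernel_dom_integrable[OF tail_kernel_measurable kernel_dom_tail[OF b, of \<alpha> m] g y, of 0] by simp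
qed

lemma truncated_jump_integral:
  fixes s x b :: real
  assumes s: "0 < s" "s < 1" and x: "0 < x" and b: "0 < b"
  shows "integrable lborel (\<lambda>w. indicator {0<..<b} w * (jump_kernel s w * (exp (- (2 * x * w)) - 1)))"
    and "(\<integral>w. indicator {0<..<b} w * (jump_kernel s w * (exp (- (2 * x * w)) - 1)) \<partial>lborel)
        = - (2 powr s * Gamma (1 - s) / s) * x powr s - (laplace (tail_kernel b (-1 - s)) x - b powr (- s) / s)"
proof -
  let ?f = "\<lambda>w. w powr (-1 - s) * (exp (- (2 * x * w)) - 1)"
  have KJ: "jump_kernel s w * (exp (- (2 * x * w)) - 1) = indicator {0<..} w * ?f w" for w
    by (simp add: jump_kernel_def)
  have IJ: "integrable lborel (\<lambda>w. indicator {0<..} w * ?f w)"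
    using jump_kernel_integrable[OF s x] unfolding KJ .
  have I1: "integrable lborel (\<lambda>w. indicator {0<..<b} w * ?f w)"
    by (rule integrable_restrict[OF IJ]) auto
  have I2: "integrable lborel (\<lambda>w. indicator {b<..} w * ?f w)"
    by (rule integrable_restrict[OF IJ]) (use b in auto)
  have ind: "indicator S w * (jump_kernel s w * (exp (- (2 * x * w)) - 1)) = indicator S w * ?f w" if "S \<subseteq> {0<..}" for S w
    using that by (auto simp: jump_kernel_def indicator_def)
  show "integrable lborel (\<lambda>w. indicator {0<..<b} w * (jump_kernel s w * (exp (- (2 * x * w)) - 1)))"
    using I1 by (subst ind) auto
  have "- (2 powr s * Gamma (1 - s) / s) * x powr s = (\<integral>w. indicator {0<..} w * ?f w \<partial>lborel)"
    using jump_kernel_laplace[OF s x] unfolding KJ by simp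
  also have "\<dots> = (\<integral>w. indicator {0<..<b} w * ?f w + indicator {b<..} w * ?f w \<partial>lborel)"
    by (rule integral_cong_AE) (use indicator_split_AE[OF b] in \<open>auto elim!: eventually_mono simp: algebra_simps\<close>)
  also have "\<dots> = (\<integral>w. indicator {0<..<b} w * ?f w \<partial>lborel) + (\<integral>w. indicator {b<..} w * ?f w \<partial>lborel)"
    by (rule Bochner_Integration.integral_add[OF I1 I2])
  also have "(\<integral>w. indicator {b<..} w * ?f w \<partial>lborel)
      = (\<integral>w. tail_kernel b (-1 - s) w * exp (- (2 * x * w)) - indicator {b<..} w * w powr (-1 - s) \<partial>lborel)"
    by (intro Bochner_Integration.integral_cong refl) (simp add: tail_kernel_def algebra_simps)
  also have "\<dots> = laplace (tail_kernel b (-1 - s)) x - b powr (- s) / s"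
    using tail_kernel_integrable[OF b, of "2 * x" "-1 - s"] x powr_tail_integral[OF b s(1)]
    by (simp add: laplace_def Bochner_Integration.integral_diff)
  finally have F: "- (2 powr s * Gamma (1 - s) / s) * x powr s
     = (\<integral>w. indicator {0<..<b} w * ?f w \<partial>lborel) + (laplace (tail_kernel b (-1 - s)) x - b powr (- s) / s)" .
  have eqI: "(\<integral>w. indicator {0<..<b} w * (jump_kernel s w * (exp (- (2 * x * w)) - 1)) \<partial>lborel)
     = (\<integral>w. indicator {0<..<b} w * ?f w \<partial>lborel)"
    by (intro Bochner_Integration.integral_cong refl ind) auto
  show "(\<integral>w. indicator {0<..<b} w * (jump_kernel s w * (exp (- (2 * x * w)) - 1)) \<partial>lborel)
        = - (2 powr s * Gamma (1 - s) / s) * x powr s - (laplace (tail_kernel b (-1 - s)) x - b powr (- s) / s)"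
    unfolding eqI using F by linarith
qed

text \<open>The constant term: \<open>(1+b)/b = 1/sin\<^sup>2(\<pi>/8) = 2(2+\<surd>2)\<close>, which produces \<open>d\<^sub>0\<close>.\<close>

lemma tan8sq_ratio: "(1 + tan8sq) / tan8sq = 2 * (2 + sqrt 2)"
proof -
  let ?a = "pi / 8"
  have c: "0 < cos ?a" using cos_half_pos[of "pi/4"] by simp
  have sn: "0 < sin ?a" using sin_half_pos[of "pi/4"] by simp
  have "cos (2 * ?a) = 1 - 2 * sin ?a ^ 2" by (rule cos_double_sin)
  moreover have "cos (2 * ?a) = sqrt 2 / 2" using cos_45 by simp
  ultimately have s2: "(sin ?a)\<^sup>2 = (2 - sqrt 2) / 4" by simp
  have "(1 + tan8sq) / tan8sq = ((cos ?a)\<^sup>2 + (sin ?a)\<^sup>2) / (sin ?a)\<^sup>2"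
    unfolding tan8sq_def tan_def using c sn by (simp add: field_simps power2_eq_square)
  also have "\<dots> = 1 / (sin ?a)\<^sup>2" by simp
  also have "\<dots> = 4 / (2 - sqrt 2)" unfolding s2 by simp
  also have "\<dots> = 2 * (2 + sqrt 2)"
  proof -
    have q: "sqrt 2 * sqrt 2 = (2::real)" by simp
    have "2 - sqrt 2 \<noteq> 0"
    proof
      assume "2 - sqrt 2 = 0"
      then have "sqrt 2 = 2" by simp
      with q show False by simp
    qed
    then show ?thesis using q by (simp add: field_simps algebra_simps)
  qed
  finally show ?thesis .
qed

lemma tan8sq_constant: "(1 + tan8sq) powr s * tan8sq powr (- s) = 2 powr s * (2 + sqrt 2) powr s"
proof -
  have "(1 + tan8sq) powr s * tan8sq powr (- s) = ((1 + tan8sq) / tan8sq) powr s"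
    using tan8sq_pos by (simp add: powr_divide powr_minus divide_inverse[symmetric])
  also have "\<dots> = 2 powr s * (2 + sqrt 2) powr s" unfolding tan8sq_ratio by (rule powr_mult)
  finally show ?thesis .
qed

text \<open>With \<open>q = s - 1 + d\<close>, the transformed integrand is
  \<open>w\<^sup>-\<^sup>1\<^sup>-\<^sup>s ((1+w)\<^sup>s\<^sup>-\<^sup>1 - g\<^sub>q(w) e\<^sup>-\<^sup>2\<^sup>x\<^sup>w)\<close>.  Expanding \<open>g\<^sub>q(w) = 1 + \<Sum>\<^sub>i\<^sub>=\<^sub>1\<^sub>.\<^sub>.\<^sub>N c\<^sub>i w\<^sup>i + w\<^sup>N\<^sup>+\<^sup>1 r\<^sub>N(w)\<close>
  leaves the remainder kernel \<open>w\<^sup>N\<^sup>-\<^sup>s r\<^sub>N(w)\<close> on \<open>(0,b)\<close>, dominated by \<open>w\<^sup>N\<^sup>-\<^sup>s\<close>.\<close>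

definition gq_exponent :: "real \<Rightarrow> nat \<Rightarrow> real" where "gq_exponent s d = s - 1 + real d"

definition taylor_rem :: "real \<Rightarrow> nat \<Rightarrow> nat \<Rightarrow> real \<Rightarrow> real" where
  "taylor_rem s d N w = (gq (gq_exponent s d) w - (\<Sum>i\<le>N. gq_coeff (gq_exponent s d) i * w ^ i)) / w ^ Suc N"

definition rem_kernel :: "real \<Rightarrow> nat \<Rightarrow> nat \<Rightarrow> real \<Rightarrow> real" where
  "rem_kernel s d N w = indicator {0<..<tan8sq} w * w powr (real N - s) * taylor_rem s d N w"

lemma rem_kernel_measurable: "rem_kernel s d N \<in> borel_measurable borel"
  unfolding rem_kernel_def[abs_def] taylor_rem_def[abs_def] gq_def[abs_def] by measurable

lemma kernel_dom_rem: "\<exists>A. kernel_dom (rem_kernel s d N) A (real N - s)"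
proof -
  obtain B where B: "\<forall>w. 0 < w \<and> w < tan8sq \<longrightarrow> \<bar>taylor_rem s d N w\<bar> \<le> B"
    using gq_taylor_remainder_bounded[OF tan8sq_pos, of "gq_exponent s d" N] unfolding taylor_rem_def by blast
  show ?thesis unfolding kernel_dom_def
  proof (intro exI[of _ "max B 0"] allI)
    fix w :: real
    show "\<bar>rem_kernel s d N w\<bar> \<le> max B 0 * (indicator {0<..} w * w powr (real N - s))"
    proof (cases "0 < w \<and> w < tan8sq")
      case True
      have "\<bar>rem_kernel s d N w\<bar> = w powr (real N - s) * \<bar>taylor_rem s d N w\<bar>" using True by (simp add: rem_kernel_def abs_mult)
      also have "\<dots> \<le> w powr (real N - s) * max B 0" using B True by (intro mult_left_mono) auto
      finally show ?thesis using True by (simp add: mult.commute)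
    next
      case False
      then show ?thesis by (auto simp: rem_kernel_def indicator_def)
    qed
  qed
qed

lemma order_family_rem:
  assumes s1: "s < 1"
  shows "order_family (s - real N - 1) (laplace_derivs (rem_kernel s d N))"
proof -
  obtain A where A: "kernel_dom (rem_kernel s d N) A (real N - s)" using kernel_dom_rem by blast
  have "order_family (- (real N - s + 1)) (laplace_derivs (rem_kernel s d N))"
    by (rule order_family_laplace[OF rem_kernel_measurable A]) (use s1 in simp)
  then show ?thesis by (simp add: algebra_simps)
qed

lemma subst_integrand_decomp:
  assumes w: "0 < w"
  shows "subst_integrand s d x w = - (w powr (-1 - s) * (1 - (1 + w) powr (s - 1))) - jump_kernel s w * (exp (- (2 * x * w)) - 1)
     - (\<Sum>i\<in>{1..N}. gq_coeff (gq_exponent s d) i * (w powr (real i - 1 - s) * exp (- (2 * x * w))))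
     - w powr (real N - s) * taylor_rem s d N w * exp (- (2 * x * w))"
proof -
  let ?q = "gq_exponent s d"
  let ?e = "exp (- (2 * x * w))"
  let ?W = "w powr (-1 - s)"
  let ?S = "\<Sum>i\<in>{1..N}. gq_coeff ?q i * w ^ i"
  have W_pow: "?W * w ^ n = w powr (real n - 1 - s)" for n
  proof -
    have "?W * w ^ n = w powr (-1 - s + real n)" using w by (simp add: powr_add powr_realpow)
    then show ?thesis by (simp add: algebra_simps)
  qed
  have h1: "subst_integrand s d x w = ?W * ((1 + w) powr (s - 1) - gq ?q w * ?e)"
    unfolding subst_integrand_def gq_def gq_exponent_def by (simp add: mult.assoc)
  have sp: "(\<Sum>i\<le>N. gq_coeff ?q i * w ^ i) = 1 + ?S"
  proof -
    have "{..N} = insert 0 {1..N}" by auto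
    then show ?thesis by (simp add: gq_coeff_0)
  qed
  have G: "gq ?q w = 1 + ?S + w ^ Suc N * taylor_rem s d N w"
    using w unfolding taylor_rem_def sp[symmetric] by simp
  have WS: "?W * ?S * ?e = (\<Sum>i\<in>{1..N}. gq_coeff ?q i * (w powr (real i - 1 - s) * ?e))"
  proof -
    have "?W * ?S * ?e = (\<Sum>i\<in>{1..N}. gq_coeff ?q i * ((?W * w ^ i) * ?e))"
      by (simp add: sum_distrib_left sum_distrib_right mult_ac)
    also have "\<dots> = (\<Sum>i\<in>{1..N}. gq_coeff ?q i * (w powr (real i - 1 - s) * ?e))"
    proof (intro sum.cong refl)
      fix i assume "i \<in> {1..N}"
      have "?W * w ^ i = w powr (real i - 1 - s)" by (rule W_pow)
      then show "gq_coeff ?q i * ((?W * w ^ i) * ?e) = gq_coeff ?q i * (w powr (real i - 1 - s) * ?e)" by simp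
    qed
    finally show ?thesis .
  qed
  have WP: "?W * w ^ Suc N = w powr (real N - s)"
    using W_pow[of "Suc N"] by simp
  have KJ: "jump_kernel s w = ?W" using w by (simp add: jump_kernel_def)
  have regroup: "W * (A - (1 + S + P * R) * e)
      = - (W * (1 - A)) - W * (e - 1) - (W * S) * e - (W * P) * R * e" for W A S P R e :: real
    by (simp add: algebra_simps)
  show ?thesis
    unfolding h1 G regroup WS WP KJ ..
qed

lemma truncated_power_term_integral:
  fixes a s x b :: real and i :: nat
  assumes i: "1 \<le> i" and s: "s < 1" and x: "0 < x" and b: "0 < b"
  defines "f \<equiv> \<lambda>w. indicator {0<..<b} w * (a * (w powr (real i - 1 - s) * exp (- (2 * x * w))))"
  shows "integrable lborel f"
    and "(\<integral>w. f w \<partial>lborel)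
           = a * (Gamma (real i - s) * 2 powr (s - real i) * x powr (s - real i)
                  - laplace (tail_kernel b (real i - 1 - s)) x)"
proof -
  have g: "-1 < real i - 1 - s" using i s by simp
  have x2: "0 < 2 * x" using x by simp
  have f_eq: "f = (\<lambda>w. a * (indicator {0<..<b} w * w powr (real i - 1 - s) * exp (- ((2 * x) * w))))"
    unfolding f_def by (simp add: fun_eq_iff mult_ac)
  show "integrable lborel f"
    unfolding f_eq using truncated_gamma_integral(1)[OF g x2 b] by simp
  have "(\<integral>w. f w \<partial>lborel) = a * (\<integral>w. indicator {0<..<b} w * w powr (real i - 1 - s) * exp (- ((2 * x) * w)) \<partial>lborel)"
    unfolding f_eq by (rule integral_mult_right_zero)
  also have "(\<integral>w. indicator {0<..<b} w * w powr (real i - 1 - s) * exp (- ((2 * x) * w)) \<partial>lborel)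
      = Gamma (real i - 1 - s + 1) * (2 * x) powr (- (real i - 1 - s + 1))
        - laplace (tail_kernel b (real i - 1 - s)) x"
    unfolding truncated_gamma_integral(2)[OF g x2 b] by (simp add: laplace_def tail_kernel_def)
  also have "Gamma (real i - 1 - s + 1) * (2 * x) powr (- (real i - 1 - s + 1))
      = Gamma (real i - s) * 2 powr (s - real i) * x powr (s - real i)"
    using x by (simp add: powr_mult)
  finally show "(\<integral>w. f w \<partial>lborel)
      = a * (Gamma (real i - s) * 2 powr (s - real i) * x powr (s - real i)
             - laplace (tail_kernel b (real i - 1 - s)) x)" .
qed

lemma subst_integrand_integral:
  assumes s: "0 < s" "s < 1" and x: "0 < x"
  shows "integrable lborel (\<lambda>w. indicator {0<..<tan8sq} w * subst_integrand s d x w)"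
    and "(\<integral>w. indicator {0<..<tan8sq} w * subst_integrand s d x w \<partial>lborel)
      = - (((1 + tan8sq) powr s - 1) * tan8sq powr (- s) / s)
        + ((2 powr s * Gamma (1 - s) / s) * x powr s
           + (laplace (tail_kernel tan8sq (-1 - s)) x - tan8sq powr (- s) / s))
        - (\<Sum>i\<in>{1..N}. gq_coeff (gq_exponent s d) i * (Gamma (real i - s) * 2 powr (s - real i)
             * x powr (s - real i) - laplace (tail_kernel tan8sq (real i - 1 - s)) x))
        - laplace (rem_kernel s d N) x"
proof -
  let ?ind = "indicator {0<..<tan8sq} :: real \<Rightarrow> real"
  define f1 where "f1 w = ?ind w * (- (w powr (-1 - s) * (1 - (1 + w) powr (s - 1))))" for w
  define f2 where "f2 w = ?ind w * (- (jump_kernel s w * (exp (- (2 * x * w)) - 1)))" for w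
  define f3 where "f3 i w = ?ind w * (gq_coeff (gq_exponent s d) i * (w powr (real i - 1 - s)
      * exp (- (2 * x * w))))" for i w
  define f4 where "f4 w = rem_kernel s d N w * exp (- (2 * x * w))" for w
  have dec: "?ind w * subst_integrand s d x w = f1 w + f2 w - (\<Sum>i\<in>{1..N}. f3 i w) - f4 w" for w
  proof (cases "0 < w \<and> w < tan8sq")
    case True
    then show ?thesis
      unfolding f1_def f2_def f3_def f4_def subst_integrand_decomp[OF conjunct1[OF True], of s d x N]
      by (simp add: rem_kernel_def mult_ac sum_distrib_left)
  qed (simp add: f1_def f2_def f3_def f4_def rem_kernel_def)
  have I1: "integrable lborel f1" and V1: "(\<integral>w. f1 w \<partial>lborel) = - (((1 + tan8sq) powr s - 1) * tan8sq powr (- s) / s)"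
    unfolding f1_def using powr_head_integral[OF tan8sq_pos s] by simp_all
  have I2: "integrable lborel f2"
    and V2: "(\<integral>w. f2 w \<partial>lborel) = (2 powr s * Gamma (1 - s) / s) * x powr s
             + (laplace (tail_kernel tan8sq (-1 - s)) x - tan8sq powr (- s) / s)"
    unfolding f2_def using truncated_jump_integral[OF s x tan8sq_pos] by simp_all
  note T3 = truncated_power_term_integral[OF _ s(2) x tan8sq_pos, of _ "gq_coeff (gq_exponent s d) _"]
  have I3: "integrable lborel (f3 i)" if "i \<in> {1..N}" for i
    using T3(1)[of i] that unfolding f3_def by simp
  have V3: "(\<integral>w. f3 i w \<partial>lborel) = gq_coeff (gq_exponent s d) i * (Gamma (real i - s) * 2 powr (s - real i)
      * x powr (s - real i) - laplace (tail_kernel tan8sq (real i - 1 - s)) x)" if "i \<in> {1..N}" for i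
    using T3(2)[of i] that unfolding f3_def by simp
  obtain A where A: "kernel_dom (rem_kernel s d N) A (real N - s)" using kernel_dom_rem by blast
  have I4: "integrable lborel f4"
    unfolding f4_def using kernel_dom_integrable[OF rem_kernel_measurable A _, of "2 * x" 0] s x
    by (simp add: mult_ac)
  have V4: "(\<integral>w. f4 w \<partial>lborel) = laplace (rem_kernel s d N) x" unfolding f4_def laplace_def ..
  have I3s: "integrable lborel (\<lambda>w. \<Sum>i\<in>{1..N}. f3 i w)" using I3 by auto
  show "integrable lborel (\<lambda>w. ?ind w * subst_integrand s d x w)"
    unfolding dec using I1 I2 I3s I4 by auto
  have "(\<integral>w. ?ind w * subst_integrand s d x w \<partial>lborel)
      = (\<integral>w. f1 w \<partial>lborel) + (\<integral>w. f2 w \<partial>lborel) - (\<Sum>i\<in>{1..N}. (\<integral>w. f3 i w \<partial>lborel)) - (\<integral>w. f4 w \<partial>lborel)"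
    unfolding dec using I1 I2 I3s I4 I3
    by (simp add: Bochner_Integration.integral_diff Bochner_Integration.integral_add integral_sum)
  then show "(\<integral>w. ?ind w * subst_integrand s d x w \<partial>lborel)
      = - (((1 + tan8sq) powr s - 1) * tan8sq powr (- s) / s)
        + ((2 powr s * Gamma (1 - s) / s) * x powr s
           + (laplace (tail_kernel tan8sq (-1 - s)) x - tan8sq powr (- s) / s))
        - (\<Sum>i\<in>{1..N}. gq_coeff (gq_exponent s d) i * (Gamma (real i - s) * 2 powr (s - real i)
             * x powr (s - real i) - laplace (tail_kernel tan8sq (real i - 1 - s)) x))
        - laplace (rem_kernel s d N) x"
    unfolding V1 V2 V4 using V3 by simp
qed

definition expansion_coeff :: "real \<Rightarrow> nat \<Rightarrow> nat \<Rightarrow> real" where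
  "expansion_coeff s d k = - 2 * gq_coeff (gq_exponent s d) k * Gamma (real k - s) * 2 powr (s - real k)"

definition rem_family :: "real \<Rightarrow> nat \<Rightarrow> nat \<Rightarrow> nat \<Rightarrow> real \<Rightarrow> real" where
  "rem_family s d N j x = 2 * laplace_derivs (tail_kernel tan8sq (-1 - s)) j x
     + (\<Sum>i\<in>{1..N}. 2 * gq_coeff (gq_exponent s d) i * laplace_derivs (tail_kernel tan8sq (real i - 1 - s)) j x)
     + (- 2) * laplace_derivs (rem_kernel s d N) j x"

lemma order_family_expansion_rem:
  assumes "s < 1"
  shows "order_family (s - real N - 1) (rem_family s d N)"
  unfolding rem_family_def[abs_def]
  by (intro order_family_add order_family_scale order_family_sum order_family_tail tan8sq_pos
      order_family_rem assms finite_atLeastAtMost)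

lemma l1_expansion:
  assumes s: "0 < s" "s < 1" and x: "0 < x"
  shows "(LINT \<theta>:{-pi/4..pi/4}|lborel. l1_integrand s d x \<theta>) =
    (2 powr (1 + s) / s) * Gamma (1 - s) * x powr s - (2 powr (1 + s) * (2 + sqrt 2) powr s / s)
    + (\<Sum>k=1..N. expansion_coeff s d k * x powr (s - real k)) + rem_family s d N 0 x"
proof -
  have C: "2 * 2 powr s = (2::real) powr (1 + s)" by (simp add: powr_add)
  have split_sum: "(\<Sum>i\<in>{1..N}. gq_coeff (gq_exponent s d) i * (Gamma (real i - s) * 2 powr (s - real i)
        * x powr (s - real i) - laplace (tail_kernel tan8sq (real i - 1 - s)) x))
      = (\<Sum>i\<in>{1..N}. gq_coeff (gq_exponent s d) i * Gamma (real i - s) * 2 powr (s - real i) * x powr (s - real i))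
        - (\<Sum>i\<in>{1..N}. gq_coeff (gq_exponent s d) i * laplace (tail_kernel tan8sq (real i - 1 - s)) x)"
    by (simp add: sum_subtractf[symmetric] algebra_simps)
  have coeffs: "(\<Sum>k=1..N. expansion_coeff s d k * x powr (s - real k))
      = - 2 * (\<Sum>i\<in>{1..N}. gq_coeff (gq_exponent s d) i * Gamma (real i - s) * 2 powr (s - real i) * x powr (s - real i))"
    unfolding expansion_coeff_def by (simp add: sum_distrib_left mult_ac)
  have rem: "rem_family s d N 0 x = 2 * laplace (tail_kernel tan8sq (-1 - s)) x
      + 2 * (\<Sum>i\<in>{1..N}. gq_coeff (gq_exponent s d) i * laplace (tail_kernel tan8sq (real i - 1 - s)) x)
      - 2 * laplace (rem_kernel s d N) x"
    unfolding rem_family_def laplace_derivs_0 by (simp add: sum_distrib_left mult_ac)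
  show ?thesis
    unfolding l1_integral_substitution[OF subst_integrand_integral(1)[OF s x]]
      subst_integrand_integral(2)[OF s x, of d N] split_sum coeffs rem
    using tan8sq_constant[of s] s by (simp add: field_simps C[symmetric])
qed

definition expansion_family :: "real \<Rightarrow> nat \<Rightarrow> nat \<Rightarrow> nat \<Rightarrow> real \<Rightarrow> real" where
  "expansion_family s d N j x =
     (2 powr (1 + s) / s * Gamma (1 - s)) * powr_family s j x
     + const_family (- (2 powr (1 + s) * (2 + sqrt 2) powr s / s)) j x
     + (\<Sum>k\<in>{1..N}. expansion_coeff s d k * powr_family (s - real k) j x)
     + rem_family s d N j x"

lemma order_family_expansion:
  assumes s: "0 < s" "s < 1"
  shows "order_family s (expansion_family s d N)"
proof -
  have "order_family s (const_family c)" for c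
    using order_family_mono[OF order_family_const] s by simp
  moreover have "order_family s (powr_family (s - real k))" for k
    using order_family_mono[OF order_family_powr] by simp
  moreover have "order_family s (rem_family s d N)"
    using order_family_mono[OF order_family_expansion_rem[OF s(2)]] by simp
  ultimately show ?thesis
    unfolding expansion_family_def[abs_def]
    by (intro order_family_add order_family_scale order_family_sum finite_atLeastAtMost
        order_family_powr[of s, simplified])
qed

lemma l1_eq_expansion_family:
  assumes s: "0 < s" "s < 1"
  shows "l1 s (z :: 'a::euclidean_space \<times> 'a) = expansion_family s DIM('a) N 0 (lam_of z)"
proof -
  have x: "0 < lam_of z" using lam_of_ge1[of z] by linarith
  have "l1 s z = (LINT \<theta>:{-pi/4..pi/4}|lborel. l1_integrand s DIM('a) (lam_of z) \<theta>)"
    unfolding l1_def l1_integrand_def lam_of_def by simp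
  also have "\<dots> = expansion_family s DIM('a) N 0 (lam_of z)"
    using l1_expansion[OF s x, of "DIM('a)" N]
    by (simp add: expansion_family_def powr_family_def const_family_def)
  finally show ?thesis .
qed

lemma l1_minus_expansion:
  assumes s: "0 < s" "s < 1"
  shows "(\<lambda>(v :: 'a::euclidean_space, \<xi>). let lam = 1 + (norm \<xi>)\<^sup>2 + (norm v)\<^sup>2 / 4 in
            l1 s (v, \<xi>)
            - ((2 powr (1 + s) / s) * Gamma (1 - s) * lam powr s
               - (2 powr (1 + s) * (2 + sqrt 2) powr s / s)
               + (\<Sum>k=1..N. expansion_coeff s DIM('a) k * lam powr (s - real k))))
        = (\<lambda>z. rem_family s DIM('a) N 0 (lam_of z))"
  using l1_eq_expansion_family[OF s, where 'a='a and N=N]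
  by (auto simp: fun_eq_iff lam_of_def expansion_family_def powr_family_def const_family_def)

text \<open>Lemma 3.6: \<open>l\<^sub>1\<^sub>;\<^sub>d \<in> S\<^sup>s\<close>, and \<open>l\<^sub>1\<^sub>;\<^sub>d - (c\<^sub>0 \<lambda>\<^sup>s - d\<^sub>0 + \<Sum>\<^sub>k\<^sub>=\<^sub>1\<^sub>.\<^sub>.\<^sub>N c\<^sub>k \<lambda>\<^sup>s\<^sup>-\<^sup>k) = R\<^sub>N \<circ> \<lambda> \<in> S\<^sup>s\<^sup>-\<^sup>N\<^sup>-\<^sup>1\<close>.\<close>

theorem lemma3p6:
  fixes s :: real
  assumes "DIM('a::euclidean_space) \<ge> 2" and "0 < s" and "s < 1"
  shows "symbol_class s (l1 s :: 'a \<times> 'a \<Rightarrow> real) \<and>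
    (\<exists>c :: nat \<Rightarrow> real. \<forall>N::nat. N \<ge> 1 \<longrightarrow>
       symbol_class (s - real N - 1)
         (\<lambda>(v :: 'a, \<xi>).
            let lam = 1 + (norm \<xi>)\<^sup>2 + (norm v)\<^sup>2 / 4 in
            l1 s (v, \<xi>)
            - ((2 powr (1 + s) / s) * Gamma (1 - s) * lam powr s
               - (2 powr (1 + s) * (2 + sqrt 2) powr s / s)
               + (\<Sum>k=1..N. c k * lam powr (s - real k)))))"
proof (intro conjI exI[of _ "expansion_coeff s DIM('a)"] allI impI)
  have s: "0 < s" "s < 1" using assms by auto
  have "l1 s = (\<lambda>z::'a \<times> 'a. expansion_family s DIM('a) 0 0 (lam_of z))"
    using l1_eq_expansion_family[OF s] by blast
  then show "symbol_class s (l1 s :: 'a \<times> 'a \<Rightarrow> real)"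
    using symbol_class_order_family[OF order_family_expansion[OF s]] by simp
qed (simp only: l1_minus_expansion[OF \<open>0 < s\<close> \<open>s < 1\<close>],
     rule symbol_class_order_family[OF order_family_expansion_rem[OF \<open>s < 1\<close>]])


end
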